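(* Let $T$ be a bounded-degree tree with initial vertex weights. The following set of operations has a simple RC implementation: $\mathrm{SubtractWeight}(v,w)$, which subtracts $w$ from the weight of vertex $v$; $\mathrm{JoinEdge}(e)$, which marks tree edge $e$ as joined (initially no edge is joined); and $\mathrm{QueryWeight}(v)$, which returns the total weight of the connected component containing $v$ in the subgraph consisting of all vertices and the joined edges.
   Context: RC tree: tree contraction repeatedly applies, in parallel to independent sets of vertices, rake (remove a leaf and merge it into its neighbor) and compress (remove a degree-2 vertex, replacing its two incident edges by one edge joining its neighbors). The RC tree records the resulting recursive clustering. A cluster is a connected set of vertices and edges of $T$; its boundary vertices are the vertices outside it that are endpoints of its edges; every cluster has at most two boundary vertices (binary: two, unary: one, root/nullary: none). Leaves of the RC tree are the vertices and edges of $T$. Each internal cluster is the disjoint union of its children, exactly one of which is a single vertex (its representative, the vertex removed by the corresponding rake/compress), the others being exactly the clusters having the representative as a boundary vertex. Simple RC implementation: the implementation uses an RC tree and (1) maintains at each cluster a value computable in constant time from its children's values; (2) each query traverses from a leaf of the RC tree towards the root, examining only values at visited clusters and their children, with constant time per value and constant space; (3) each update changes the value of one leaf using an associative constant-time operation and then reevaluates all values on the path from that leaf to the root. *)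

theory Defs
  imports Complex_Main
begin

definition adj_rel :: "'a set set \<Rightarrow> ('a \<times> 'a) set" where
  "adj_rel E = {(x, y). {x, y} \<in> E}"

definition is_tree :: "'a set \<Rightarrow> 'a set set \<Rightarrow> bool" where
  "is_tree V E \<longleftrightarrow> finite V \<and> V \<noteq> {} \<and>
     E \<subseteq> {{u, w} | u w. u \<in> V \<and> w \<in> V \<and> u \<noteq> w} \<and>
     (\<forall>u\<in>V. \<forall>w\<in>V. (u, w) \<in> (adj_rel E)\<^sup>*) \<and>
     (\<comment> \<open>acyclic: every edge is a bridge\<close>
      \<forall>e\<in>E. \<forall>u w. e = {u, w} \<longrightarrow> (u, w) \<notin> (adj_rel (E - {e}))\<^sup>*)"

definition degree_bounded :: "nat \<Rightarrow> 'a set \<Rightarrow> 'a set set \<Rightarrow> bool" where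
  "degree_bounded d V E \<longleftrightarrow> (\<forall>v\<in>V. card {e\<in>E. v \<in> e} \<le> d)"

text \<open>Elements of T: vertices (Inl v) and edges (Inr e). A cluster is a set of elements.\<close>

type_synonym 'a elem = "'a + 'a set"
type_synonym 'a cluster = "'a elem set"

definition elems :: "'a set \<Rightarrow> 'a set set \<Rightarrow> 'a cluster" where
  "elems V E = Inl ` V \<union> Inr ` E"

definition inc_rel :: "('a elem \<times> 'a elem) set" where
  "inc_rel = {(Inl v, Inr e) | v e. v \<in> e} \<union> {(Inr e, Inl v) | v e. v \<in> e}"

definition cluster_connected :: "'a cluster \<Rightarrow> bool" where
  "cluster_connected X \<longleftrightarrow> X \<noteq> {} \<and>
     (\<forall>x\<in>X. \<forall>y\<in>X. (x, y) \<in> (inc_rel \<inter> (X \<times> X))\<^sup>*)"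

definition boundary :: "'a cluster \<Rightarrow> 'a set" where
  "boundary X = {u. Inl u \<notin> X \<and> (\<exists>e. Inr e \<in> X \<and> u \<in> e)}"

text \<open>An RC tree of T, given as its family F of clusters (nodes of the RC tree), an ordering
  ch X of the children of each node and an ordering bd X of the boundary vertices of each
  cluster (the concrete representation used by an implementation).\<close>
definition is_RC_tree ::
  "'a set \<Rightarrow> 'a set set \<Rightarrow> 'a cluster set \<Rightarrow> ('a cluster \<Rightarrow> 'a cluster list)
     \<Rightarrow> ('a cluster \<Rightarrow> 'a list) \<Rightarrow> bool" where
  "is_RC_tree V E F ch bd \<longleftrightarrow>
     (\<forall>x\<in>elems V E. {x} \<in> F) \<and> elems V E \<in> F \<and>
     (\<forall>X\<in>F. X \<subseteq> elems V E \<and> cluster_connected X \<and> card (boundary X) \<le> 2 \<and>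
             set (bd X) = boundary X \<and> distinct (bd X)) \<and>
     (\<forall>X\<in>F. \<forall>Y\<in>F. X \<subseteq> Y \<or> Y \<subseteq> X \<or> X \<inter> Y = {}) \<and>
     (\<forall>X\<in>F. (\<exists>x. X = {x}) \<longrightarrow> ch X = []) \<and>
     (\<forall>X\<in>F. \<not> (\<exists>x. X = {x}) \<longrightarrow>
        distinct (ch X) \<and>
        set (ch X) = {Y\<in>F. Y \<subset> X \<and> \<not> (\<exists>Z\<in>F. Y \<subset> Z \<and> Z \<subset> X)} \<and>
        \<Union> (set (ch X)) = X \<and> pairwise disjnt (set (ch X)) \<and>
        (\<exists>r. {Inl r} \<in> set (ch X) \<and>
             (\<forall>Y\<in>set (ch X). Y \<noteq> {Inl r} \<longrightarrow> r \<in> boundary Y) \<and>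
             (\<forall>Y\<in>F. r \<in> boundary Y \<longrightarrow> Y \<subset> X)))"

definition idx :: "'b list \<Rightarrow> 'b \<Rightarrow> nat" where
  "idx xs x = (LEAST i. i < length xs \<and> xs ! i = x)"

definition rep :: "('a cluster \<Rightarrow> 'a cluster list) \<Rightarrow> 'a cluster \<Rightarrow> 'a" where
  "rep ch X = (THE r. {Inl r} \<in> set (ch X))"

text \<open>Local combinatorial shape of an internal cluster: number of its boundary vertices,
  position of the representative among the children, and for every child the list of
  its boundary vertices, each encoded as 0 (= the representative) or i+1 (= the i-th
  boundary vertex of the parent).\<close>
type_synonym shape = "nat \<times> nat \<times> nat list list"

definition slot :: "('a cluster \<Rightarrow> 'a cluster list) \<Rightarrow> ('a cluster \<Rightarrow> 'a list)
    \<Rightarrow> 'a cluster \<Rightarrow> 'a \<Rightarrow> nat" where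
  "slot ch bd X b = (if b = rep ch X then 0 else Suc (idx (bd X) b))"

definition shape :: "('a cluster \<Rightarrow> 'a cluster list) \<Rightarrow> ('a cluster \<Rightarrow> 'a list)
    \<Rightarrow> 'a cluster \<Rightarrow> shape" where
  "shape ch bd X = (length (bd X), idx (ch X) {Inl (rep ch X)},
                    map (\<lambda>Y. map (slot ch bd X) (bd Y)) (ch X))"

section \<open>Constant-time computations: fixed straight-line real programs\<close>

datatype expr = Const real | Var nat | Add expr expr | Neg expr | Mul expr expr
  | IfLe expr expr expr expr

primrec eval :: "expr \<Rightarrow> real list \<Rightarrow> real" where
  "eval (Const c) env = c"
| "eval (Var i) env = env ! i"
| "eval (Add a b) env = eval a env + eval b env"
| "eval (Neg a) env = - eval a env"
| "eval (Mul a b) env = eval a env * eval b env"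
| "eval (IfLe a b c d) env = (if eval a env \<le> eval b env then eval c env else eval d env)"

type_synonym prog = "expr list"

definition run :: "prog \<Rightarrow> real list \<Rightarrow> real list" where
  "run p env = map (\<lambda>e. eval e env) p"

record rc_impl =
  val_len :: nat
  leaf_vertex :: prog      \<comment> \<open>initial vertex-leaf value from [initial weight]\<close>
  leaf_edge :: prog        \<comment> \<open>initial edge-leaf value (from [])\<close>
  arg_sub :: prog          \<comment> \<open>update argument of SubtractWeight(v,w), from [w]\<close>
  op_sub :: prog           \<comment> \<open>associative leaf operation for SubtractWeight, on old @ arg\<close>
  arg_join :: prog         \<comment> \<open>update argument of JoinEdge(e), from []\<close>
  op_join :: prog          \<comment> \<open>associative leaf operation for JoinEdge, on old @ arg\<close>
  combine :: "shape \<Rightarrow> prog" \<comment> \<open>cluster value from concatenated children values\<close>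
  q_init :: prog           \<comment> \<open>initial query state from the value of the leaf\<close>
  q_step :: "shape \<Rightarrow> nat \<Rightarrow> prog"
     \<comment> \<open>new state from state @ value of parent @ values of parent's children,
         given parent's shape and the position of the child we come from\<close>
  q_final :: expr

definition assoc_prog :: "nat \<Rightarrow> prog \<Rightarrow> bool" where
  "assoc_prog m p \<longleftrightarrow> (\<forall>a b c. length a = m \<longrightarrow> length b = m \<longrightarrow> length c = m \<longrightarrow>
      run p (run p (a @ b) @ c) = run p (a @ run p (b @ c)))"

definition wf_impl :: "rc_impl \<Rightarrow> bool" where
  "wf_impl I \<longleftrightarrow>
     length (leaf_vertex I) = val_len I \<and> length (leaf_edge I) = val_len I \<and>
     length (arg_sub I) = val_len I \<and> length (op_sub I) = val_len I \<and>
     length (arg_join I) = val_len I \<and> length (op_join I) = val_len I \<and>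
     assoc_prog (val_len I) (op_sub I) \<and> assoc_prog (val_len I) (op_join I)"

datatype 'a update = SubtractWeight 'a real | JoinEdge "'a set"

definition valid_updates :: "'a set \<Rightarrow> 'a set set \<Rightarrow> 'a update list \<Rightarrow> bool" where
  "valid_updates V E hs \<longleftrightarrow> (\<forall>u\<in>set hs. case u of SubtractWeight v w \<Rightarrow> v \<in> V
                                                | JoinEdge e \<Rightarrow> e \<in> E)"

definition cur_weight :: "('a \<Rightarrow> real) \<Rightarrow> 'a update list \<Rightarrow> 'a \<Rightarrow> real" where
  "cur_weight w0 hs v = w0 v - sum_list (map (\<lambda>u. case u of
       SubtractWeight x w \<Rightarrow> (if x = v then w else 0) | JoinEdge e \<Rightarrow> 0) hs)"

definition joined :: "'a update list \<Rightarrow> 'a set set" where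
  "joined hs = {e. JoinEdge e \<in> set hs}"

definition component_weight :: "('a \<Rightarrow> real) \<Rightarrow> 'a update list \<Rightarrow> 'a \<Rightarrow> real" where
  "component_weight w0 hs v =
     (\<Sum>u\<in>{u. (v, u) \<in> (adj_rel (joined hs))\<^sup>*}. cur_weight w0 hs u)"

definition init_leaves :: "rc_impl \<Rightarrow> ('a \<Rightarrow> real) \<Rightarrow> 'a elem \<Rightarrow> real list" where
  "init_leaves I w0 x = (case x of Inl v \<Rightarrow> run (leaf_vertex I) [w0 v]
                                 | Inr e \<Rightarrow> run (leaf_edge I) [])"

fun apply_update :: "rc_impl \<Rightarrow> ('a elem \<Rightarrow> real list) \<Rightarrow> 'a update \<Rightarrow> ('a elem \<Rightarrow> real list)" where
  "apply_update I lv (SubtractWeight v w) =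
     lv(Inl v := run (op_sub I) (lv (Inl v) @ run (arg_sub I) [w]))"
| "apply_update I lv (JoinEdge e) =
     lv(Inr e := run (op_join I) (lv (Inr e) @ run (arg_join I) []))"

definition leaf_values :: "rc_impl \<Rightarrow> ('a \<Rightarrow> real) \<Rightarrow> 'a update list \<Rightarrow> 'a elem \<Rightarrow> real list" where
  "leaf_values I w0 hs = foldl (apply_update I) (init_leaves I w0) hs"

definition consistent_values ::
  "rc_impl \<Rightarrow> 'a cluster set \<Rightarrow> ('a cluster \<Rightarrow> 'a cluster list) \<Rightarrow> ('a cluster \<Rightarrow> 'a list)
     \<Rightarrow> ('a \<Rightarrow> real) \<Rightarrow> 'a update list \<Rightarrow> ('a cluster \<Rightarrow> real list) \<Rightarrow> bool" where
  "consistent_values I F ch bd w0 hs val \<longleftrightarrow>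
     (\<forall>x. {x} \<in> F \<longrightarrow> val {x} = leaf_values I w0 hs x) \<and>
     (\<forall>X\<in>F. \<not> (\<exists>x. X = {x}) \<longrightarrow>
        val X = run (combine I (shape ch bd X)) (concat (map val (ch X))))"

text \<open>Query traversal along the leaf-to-root path (list of clusters, child before parent).\<close>
fun q_walk :: "rc_impl \<Rightarrow> ('a cluster \<Rightarrow> 'a cluster list) \<Rightarrow> ('a cluster \<Rightarrow> 'a list)
    \<Rightarrow> ('a cluster \<Rightarrow> real list) \<Rightarrow> 'a cluster list \<Rightarrow> real list \<Rightarrow> real list" where
  "q_walk I ch bd val (X # P # ps) s =
     q_walk I ch bd val (P # ps)
       (run (q_step I (shape ch bd P) (idx (ch P) X)) (s @ val P @ concat (map val (ch P))))"
| "q_walk I ch bd val _ s = s"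

definition query_result :: "rc_impl \<Rightarrow> ('a cluster \<Rightarrow> 'a cluster list) \<Rightarrow> ('a cluster \<Rightarrow> 'a list)
    \<Rightarrow> ('a cluster \<Rightarrow> real list) \<Rightarrow> 'a cluster list \<Rightarrow> real" where
  "query_result I ch bd val path =
     eval (q_final I) (q_walk I ch bd val path (run (q_init I) (val (hd path))))"

end

theory Submission
  imports Defs
begin

text \<open>The value of a cluster X records, for each boundary vertex b of X, the total current
  weight of the vertices of X reachable from b along joined edges lying in X, and, for a binary
  cluster, whether its two boundary vertices are connected in this way. Inside an internal
  cluster P every child other than the representative meets the rest of P only in its boundary
  vertices, and these lie among the at most three nodes formed by the representative and the
  boundary of P. Contracting every child to the links between its boundary vertices therefore
  yields a graph on at most three nodes, in which reachability is a fixed formula (a path of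
  length at most two); the weight reachable from a node of P is then the sum, over the children,
  of the weights hanging at the child's boundary vertices reachable from that node.

  The query state at a cluster C containing v is the weight of the component of v inside C
  together with the information which boundary vertices of C are reachable from v. Passing to
  the parent P, if v reaches a boundary vertex b of C then its component in P is that of the
  node b, which the combine formula of P computes; otherwise it does not leave C. At the root the
  state is the weight of the whole component. Truth values are encoded as the reals 0 and 1.\<close>

lemma idx_nth:
  assumes "x \<in> set xs"
  shows "idx xs x < length xs \<and> xs ! idx xs x = x"
proof -
  obtain i where "i < length xs" "xs ! i = x" using assms by (auto simp: in_set_conv_nth)
  then have "i < length xs \<and> xs ! i = x" by simp
  then show ?thesis unfolding idx_def by (rule LeastI)
qed

lemma idx_nth_distinct: "distinct xs \<Longrightarrow> i < length xs \<Longrightarrow> idx xs (xs ! i) = i"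
  using idx_nth[of "xs ! i" xs] nth_eq_iff_index_eq by fastforce

lemma sum_nth_distinct: "distinct xs \<Longrightarrow> (\<Sum>j<length xs. f (xs ! j)) = (\<Sum>x\<in>set xs. f x)"
  by (simp add: sum_list_distinct_conv_sum_set[symmetric] sum_list_sum_nth atLeast0LessThan)

lemma distinct_set_doubleton:
  assumes "distinct xs" "set xs = {p, q}" "p \<noteq> q"
  shows "xs = [p, q] \<or> xs = [q, p]"
proof -
  have "length xs = 2" using distinct_card[OF assms(1)] assms(2,3) by simp
  then obtain a b where "xs = [a, b]" by (cases xs; cases "tl xs"; auto)
  then show ?thesis using assms by (auto simp: doubleton_eq_iff)
qed

lemma card_le_2_doubleton:
  assumes "finite S" "card S \<le> 2" "p \<in> S" "q \<in> S" "p \<noteq> q"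
  shows "S = {p, q}"
proof -
  have sub: "{p, q} \<subseteq> S" using assms by auto
  have "card {p, q} = 2" using assms by simp
  then show ?thesis
    using card_subset_eq[OF assms(1) sub] assms(2) card_mono[OF assms(1) sub] by simp
qed

lemma nth_concat_equal_length:
  assumes "\<And>v. v \<in> set vs \<Longrightarrow> length v = k" "j < length vs" "x < k"
  shows "concat vs ! (k * j + x) = vs ! j ! x"
  using assms
proof (induction vs arbitrary: j)
  case (Cons v vs)
  then show ?case by (cases j) (auto simp: nth_append add.assoc)
qed simp

lemma sorted_wrt_last: "sorted_wrt R xs \<Longrightarrow> x \<in> set xs \<Longrightarrow> x = last xs \<or> R x (last xs)"
proof (induction xs)
  case (Cons a xs)
  then show ?case by (cases "xs = []") auto
qed simp

lemma sym_adj_rel: "sym (adj_rel S)"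
  by (auto intro!: symI simp: adj_rel_def insert_commute)

lemma sum_lessThan_remove:
  fixes i n :: nat
  assumes "i < n"
  shows "(\<Sum>j<n. f j) = f i + (\<Sum>j<n. if j = i then 0 else f j)"
proof -
  have "(\<Sum>j<n. if j = i then 0 else f j) = sum f ({..<n} - {i})"
    using sum.delta_remove[of "{..<n}" i "\<lambda>_. 0" f] assms by simp
  moreover have "(\<Sum>j<n. f j) = f i + sum f ({..<n} - {i})"
    using sum.remove[of "{..<n}" i f] assms by simp
  ultimately show ?thesis by simp
qed

text \<open>The two parts of a binary child hanging at its boundary vertices coincide if these are
  linked and are disjoint otherwise.\<close>

lemma sum_two_parts:
  fixes f :: "'a \<Rightarrow> real"
  assumes "finite A" "finite B" "K \<Longrightarrow> A = B \<and> c = d" "\<not> K \<Longrightarrow> A \<inter> B = {}"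
  shows "sum f ((if c then A else {}) \<union> (if d then B else {})) =
    of_bool c * sum f A + (1 - of_bool K) * (of_bool d * sum f B)"
proof (cases K)
  case False
  then show ?thesis using sum.union_disjoint[OF assms(1,2) assms(4)] by (cases c; cases d) auto
qed (use assms(3) in auto)

lemma rtrancl_card_le_3:
  assumes fin: "finite N" and card: "card N \<le> 3" and D: "D \<subseteq> N \<times> N"
    and irrefl: "\<And>x. (x, x) \<notin> D" and pq: "(p, q) \<in> D\<^sup>*"
  shows "p = q \<or> (p, q) \<in> D \<or> (\<exists>t. (p, t) \<in> D \<and> (t, q) \<in> D)"
  using pq
proof (induction rule: rtrancl_induct)
  case (step x y)
  from step(3) show ?case
  proof (elim disjE exE conjE)
    assume "p = x" then show ?thesis using step(2) by simp
  next
    assume "(p, x) \<in> D" then show ?thesis using step(2) by blast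
  next
    fix t assume pt: "(p, t) \<in> D" and tx: "(t, x) \<in> D"
    show ?thesis
    proof (rule ccontr)
      assume "\<not> ?thesis"
      then have "p \<noteq> y" "t \<noteq> y" "p \<noteq> x" using pt tx step(2) by auto
      moreover have "p \<noteq> t" "t \<noteq> x" "x \<noteq> y" using irrefl pt tx step(2) by auto
      ultimately have "card {p, t, x, y} = 4" by simp
      moreover have "{p, t, x, y} \<subseteq> N" using D pt tx step(2) by auto
      ultimately show False using card_mono[OF fin, of "{p, t, x, y}"] card by simp
    qed
  qed
qed simp

definition or_expr :: "expr \<Rightarrow> expr \<Rightarrow> expr" where
  "or_expr a b = Add a (Add b (Neg (Mul a b)))"

definition not_expr :: "expr \<Rightarrow> expr" where
  "not_expr a = Add (Const 1) (Neg a)"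

fun sum_expr :: "expr list \<Rightarrow> expr" where
  "sum_expr [] = Const 0"
| "sum_expr (x # xs) = Add x (sum_expr xs)"

fun or_exprs :: "expr list \<Rightarrow> expr" where
  "or_exprs [] = Const 0"
| "or_exprs (x # xs) = or_expr x (or_exprs xs)"

definition select_expr :: "nat \<Rightarrow> nat \<Rightarrow> (nat \<Rightarrow> expr) \<Rightarrow> expr \<Rightarrow> expr" where
  "select_expr p q F D =
     Add (Mul (Var 1) (F p))
       (Mul (not_expr (Var 1)) (Add (Mul (Var 2) (F q)) (Mul (not_expr (Var 2)) D)))"

definition select_prog :: "nat \<Rightarrow> nat \<Rightarrow> (nat \<Rightarrow> prog) \<Rightarrow> prog \<Rightarrow> prog" where
  "select_prog p q G D = map (\<lambda>i. select_expr p q (\<lambda>a. G a ! i) (D ! i)) [0..<length D]"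

lemma eval_or_expr:
  "eval a env = of_bool A \<Longrightarrow> eval b env = of_bool B \<Longrightarrow> eval (or_expr a b) env = of_bool (A \<or> B)"
  by (simp add: or_expr_def)

lemma eval_not_expr [simp]: "eval (not_expr a) env = 1 - eval a env"
  by (simp add: not_expr_def)

lemma eval_or_exprs:
  "(\<And>x. x \<in> set xs \<Longrightarrow> eval (f x) env = of_bool (P x)) \<Longrightarrow>
   eval (or_exprs (map f xs)) env = of_bool (\<exists>x\<in>set xs. P x)"
  by (induction xs) (auto simp: eval_or_expr)

lemma eval_sum_expr: "eval (sum_expr (map f [0..<n])) env = (\<Sum>j<n. eval (f j) env)"
proof -
  have "eval (sum_expr (map f xs)) env = (\<Sum>j\<leftarrow>xs. eval (f j) env)" for xs
    by (induction xs) auto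
  then show ?thesis by (simp add: sum_list_distinct_conv_sum_set atLeast0LessThan)
qed

lemma eval_select_expr:
  "env ! 1 = of_bool B0 \<Longrightarrow> env ! 2 = of_bool B1 \<Longrightarrow>
   eval (select_expr p q F D) env =
     (if B0 then eval (F p) env else if B1 then eval (F q) env else eval D env)"
  by (simp add: select_expr_def)

lemma run_select_prog:
  assumes "env ! 1 = of_bool B0" "env ! 2 = of_bool B1" "\<And>a. length (G a) = length D"
  shows "run (select_prog p q G D) env =
    (if B0 then run (G p) env else if B1 then run (G q) env else run D env)"
  by (rule nth_equalityI)
    (auto simp: run_def select_prog_def eval_select_expr[OF assms(1,2)] assms(3))

section \<open>The implementation\<close>

text \<open>Every value has four cells. The value of a vertex leaf is [w, 0, 0, 0] with w the current
  weight; that of an edge leaf is [0, 0, 0, f] with f = 1 iff the edge is joined. For a cluster X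
  that is not a vertex leaf, cell i + 1 holds the weight reachable in X from its i-th boundary
  vertex, and cell 3 is the connectivity flag of the two boundary vertices. The formulas below
  read the values of the children of a cluster P, concatenated from position off on, and name
  the nodes of P by their slots: 0 for the representative and i + 1 for the i-th boundary
  vertex.\<close>

definition cell :: "nat \<Rightarrow> nat \<Rightarrow> nat \<Rightarrow> expr" where
  "cell off j x = Var (off + 4 * j + x)"

lemma eval_cell:
  assumes "length pre = off" "\<And>v. v \<in> set vs \<Longrightarrow> length v = 4" "j < length vs" "x < 4"
  shows "eval (cell off j x) (pre @ concat vs) = vs ! j ! x"
  using nth_concat_equal_length[of vs 4 j x] assms by (simp add: cell_def nth_append add.assoc)

definition child_link_expr :: "nat \<Rightarrow> shape \<Rightarrow> nat \<Rightarrow> nat \<Rightarrow> expr" where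
  "child_link_expr off sh a b = (case sh of (nb, ir, ls) \<Rightarrow>
     or_exprs (map (\<lambda>j. if j \<noteq> ir \<and> (ls ! j = [a, b] \<or> ls ! j = [b, a])
       then cell off j 3 else Const 0) [0..<length ls]))"

text \<open>For distinct slots a and b of {0, 1, 2}, 3 - a - b is the third slot.\<close>

definition node_link_expr :: "nat \<Rightarrow> shape \<Rightarrow> nat \<Rightarrow> nat \<Rightarrow> expr" where
  "node_link_expr off sh a b = (if a = b then Const 1 else
      or_expr (child_link_expr off sh a b)
        (Mul (child_link_expr off sh a (3 - a - b)) (child_link_expr off sh (3 - a - b) b)))"

text \<open>If the two boundary vertices of the child are linked, its two weights are equal and must
  be counted once.\<close>

definition child_share_expr :: "nat \<Rightarrow> shape \<Rightarrow> nat \<Rightarrow> nat \<Rightarrow> expr" where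
  "child_share_expr off sh a j = (case sh of (nb, ir, ls) \<Rightarrow> if j = ir then Const 0 else
     (case ls ! j of
        [p] \<Rightarrow> Mul (node_link_expr off sh a p) (cell off j 1)
      | [p, q] \<Rightarrow> Add (Mul (node_link_expr off sh a p) (cell off j 1))
                   (Mul (not_expr (cell off j 3)) (Mul (node_link_expr off sh a q) (cell off j 2)))
      | _ \<Rightarrow> Const 0))"

definition reach_weight_expr :: "nat \<Rightarrow> shape \<Rightarrow> nat \<Rightarrow> expr" where
  "reach_weight_expr off sh a = (case sh of (nb, ir, ls) \<Rightarrow>
     Add (Mul (node_link_expr off sh a 0) (cell off ir 0))
       (sum_expr (map (child_share_expr off sh a) [0..<length ls])))"

definition combine_prog :: "shape \<Rightarrow> prog" where
  "combine_prog sh =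
     [Const 0, reach_weight_expr 0 sh 1, reach_weight_expr 0 sh 2, node_link_expr 0 sh 1 2]"

text \<open>A query state consists of the weight of the component of v inside the current cluster
  and the flags telling whether v reaches its first and its second boundary vertex. The
  environment of a query step is the old state (three cells), the value of the parent (four
  cells) and the values of its children, which therefore start at position 7. For a unary child
  the second slot ls ! k ! 1 is junk, but then the second flag of the state is 0.\<close>

definition node_query_prog :: "nat \<Rightarrow> shape \<Rightarrow> nat \<Rightarrow> prog" where
  "node_query_prog off sh a = (case sh of (nb, ir, ls) \<Rightarrow>
     [reach_weight_expr off sh a,
      if 0 < nb then node_link_expr off sh a 1 else Const 0,
      if 1 < nb then node_link_expr off sh a 2 else Const 0])"

definition query_step_prog :: "shape \<Rightarrow> nat \<Rightarrow> prog" where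
  "query_step_prog sh k = (case sh of (nb, ir, ls) \<Rightarrow>
     if k = ir then node_query_prog 7 sh 0
     else select_prog (ls ! k ! 0) (ls ! k ! 1) (node_query_prog 7 sh) [Var 0, Const 0, Const 0])"

definition component_impl :: rc_impl where
  "component_impl = \<lparr> val_len = 4,
     leaf_vertex = [Var 0, Const 0, Const 0, Const 0],
     leaf_edge = [Const 0, Const 0, Const 0, Const 0],
     arg_sub = [Neg (Var 0), Const 0, Const 0, Const 0],
     op_sub = [Add (Var 0) (Var 4), Add (Var 1) (Var 5), Add (Var 2) (Var 6), Add (Var 3) (Var 7)],
     arg_join = [Const 0, Const 0, Const 0, Const 1],
     op_join = [Var 4, Var 5, Var 6, Var 7],
     combine = combine_prog, q_init = [Var 0, Const 0, Const 0], q_step = query_step_prog,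
     q_final = Var 0 \<rparr>"

lemma length_4_cases: "length xs = 4 \<Longrightarrow> \<exists>a b c d. xs = [a, b, c, d]"
  by (cases xs; cases "tl xs"; cases "tl (tl xs)"; cases "tl (tl (tl xs))"; auto)

lemma wf_component_impl: "wf_impl component_impl"
  unfolding wf_impl_def assoc_prog_def
proof (intro conjI allI impI)
  fix a b c :: "real list"
  assume "length a = val_len component_impl" "length b = val_len component_impl"
    "length c = val_len component_impl"
  then obtain a0 a1 a2 a3 b0 b1 b2 b3 c0 c1 c2 c3
    where "a = [a0, a1, a2, a3]" "b = [b0, b1, b2, b3]" "c = [c0, c1, c2, c3]"
    by (auto simp: component_impl_def dest!: length_4_cases)
  then show "run (op_sub component_impl) (run (op_sub component_impl) (a @ b) @ c) =
      run (op_sub component_impl) (a @ run (op_sub component_impl) (b @ c))"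
    and "run (op_join component_impl) (run (op_join component_impl) (a @ b) @ c) =
      run (op_join component_impl) (a @ run (op_join component_impl) (b @ c))"
    by (simp_all add: component_impl_def run_def algebra_simps)
qed (simp_all add: component_impl_def)

lemma cur_weight_snoc:
  "cur_weight w0 (hs @ [u]) v = cur_weight w0 hs v -
     (case u of SubtractWeight x w \<Rightarrow> (if x = v then w else 0) | JoinEdge e \<Rightarrow> 0)"
  by (simp add: cur_weight_def)

lemma joined_snoc:
  "joined (hs @ [u]) = joined hs \<union> (case u of SubtractWeight x w \<Rightarrow> {} | JoinEdge e \<Rightarrow> {e})"
  by (cases u) (auto simp: joined_def)

lemma leaf_values_component_impl:
  "leaf_values component_impl w0 hs x = (case x of
      Inl v \<Rightarrow> [cur_weight w0 hs v, 0, 0, 0]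
    | Inr e \<Rightarrow> [0, 0, 0, of_bool (e \<in> joined hs)])"
proof (induction hs arbitrary: x rule: rev_induct)
  case Nil
  show ?case
    by (cases x) (simp_all add: leaf_values_def init_leaves_def component_impl_def run_def
        cur_weight_def joined_def)
next
  case (snoc u hs)
  have step: "leaf_values component_impl w0 (hs @ [u]) =
      apply_update component_impl (leaf_values component_impl w0 hs) u"
    by (simp add: leaf_values_def)
  show ?case
  proof (cases u)
    case SubtractWeight
    then show ?thesis unfolding step using snoc.IH
      by (cases x) (auto simp: component_impl_def run_def cur_weight_snoc joined_snoc)
  next
    case JoinEdge
    then show ?thesis unfolding step using snoc.IH
      by (cases x) (auto simp: component_impl_def run_def cur_weight_snoc joined_snoc)
  qed
qed

lemma boundary_Inl [simp]: "boundary {Inl u} = {}"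
  by (auto simp: boundary_def)

lemma boundary_Inr [simp]: "boundary {Inr e} = e"
  by (auto simp: boundary_def)

locale joined_rc_tree =
  fixes V :: "'a set" and E :: "'a set set" and F :: "'a cluster set"
    and ch :: "'a cluster \<Rightarrow> 'a cluster list" and bd :: "'a cluster \<Rightarrow> 'a list"
    and J :: "'a set set"
  assumes tree: "is_tree V E" and rc: "is_RC_tree V E F ch bd" and J_subset_E: "J \<subseteq> E"
begin

lemma finite_V: "finite V"
  using tree by (simp add: is_tree_def)

lemma E_doubleton: "e \<in> E \<Longrightarrow> \<exists>u w. e = {u, w} \<and> u \<in> V \<and> w \<in> V \<and> u \<noteq> w"
  using tree by (auto simp: is_tree_def)

lemma finite_E: "finite E"
proof -
  have "E \<subseteq> (\<lambda>(u, w). {u, w}) ` (V \<times> V)" using E_doubleton by fastforce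
  then show ?thesis using finite_V finite_subset by blast
qed

lemma finite_elems: "finite (elems V E)"
  using finite_V finite_E by (simp add: elems_def)

lemma cluster_subset_elems: "X \<in> F \<Longrightarrow> X \<subseteq> elems V E"
  using rc by (auto simp: is_RC_tree_def)

lemma finite_cluster: "X \<in> F \<Longrightarrow> finite X"
  using cluster_subset_elems finite_elems finite_subset by blast

lemma cluster_nonempty: "X \<in> F \<Longrightarrow> X \<noteq> {}"
  using rc by (auto simp: is_RC_tree_def cluster_connected_def)

lemma card_boundary_le_2: "X \<in> F \<Longrightarrow> card (boundary X) \<le> 2"
  using rc by (auto simp: is_RC_tree_def)

lemma set_bd: "X \<in> F \<Longrightarrow> set (bd X) = boundary X"
  using rc by (auto simp: is_RC_tree_def)

lemma distinct_bd: "X \<in> F \<Longrightarrow> distinct (bd X)"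
  using rc by (auto simp: is_RC_tree_def)

lemma length_bd_le_2: "X \<in> F \<Longrightarrow> length (bd X) \<le> 2"
  using card_boundary_le_2 set_bd distinct_bd distinct_card by metis

lemma laminar: "X \<in> F \<Longrightarrow> Y \<in> F \<Longrightarrow> X \<subseteq> Y \<or> Y \<subseteq> X \<or> X \<inter> Y = {}"
  using rc by (auto simp: is_RC_tree_def)

lemma singleton_in_F: "x \<in> elems V E \<Longrightarrow> {x} \<in> F"
  using rc by (auto simp: is_RC_tree_def)

lemma root_in_F: "elems V E \<in> F"
  using rc by (auto simp: is_RC_tree_def)

definition internal :: "'a cluster \<Rightarrow> bool" where
  "internal X \<longleftrightarrow> X \<in> F \<and> \<not> (\<exists>x. X = {x})"

lemma internal_in_F: "internal X \<Longrightarrow> X \<in> F"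
  by (simp add: internal_def)

lemma ch_props:
  assumes "internal X"
  shows "distinct (ch X) \<and>
    set (ch X) = {Y\<in>F. Y \<subset> X \<and> \<not> (\<exists>Z\<in>F. Y \<subset> Z \<and> Z \<subset> X)} \<and>
    \<Union> (set (ch X)) = X \<and> pairwise disjnt (set (ch X)) \<and>
    (\<exists>r. {Inl r} \<in> set (ch X) \<and>
         (\<forall>Y\<in>set (ch X). Y \<noteq> {Inl r} \<longrightarrow> r \<in> boundary Y) \<and>
         (\<forall>Y\<in>F. r \<in> boundary Y \<longrightarrow> Y \<subset> X))"
proof -
  note props = rc[unfolded is_RC_tree_def, THEN conjunct2, THEN conjunct2, THEN conjunct2,
      THEN conjunct2, THEN conjunct2]
  show ?thesis by (rule props[rule_format]) (use assms in \<open>auto simp: internal_def\<close>)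
qed

lemma set_ch: "internal X \<Longrightarrow> set (ch X) = {Y\<in>F. Y \<subset> X \<and> \<not> (\<exists>Z\<in>F. Y \<subset> Z \<and> Z \<subset> X)}"
  by (rule ch_props[THEN conjunct2, THEN conjunct1])

lemma child_in_F: "internal X \<Longrightarrow> Y \<in> set (ch X) \<Longrightarrow> Y \<in> F \<and> Y \<subset> X"
  using set_ch by blast

lemma distinct_ch: "internal X \<Longrightarrow> distinct (ch X)"
  by (rule ch_props[THEN conjunct1])

lemma Union_ch: "internal X \<Longrightarrow> \<Union> (set (ch X)) = X"
  by (rule ch_props[THEN conjunct2, THEN conjunct2, THEN conjunct1])

lemma children_disjoint:
  "internal X \<Longrightarrow> Y1 \<in> set (ch X) \<Longrightarrow> Y2 \<in> set (ch X) \<Longrightarrow> Y1 \<noteq> Y2 \<Longrightarrow> Y1 \<inter> Y2 = {}"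
  using ch_props[THEN conjunct2, THEN conjunct2, THEN conjunct2, THEN conjunct1, of X]
  unfolding pairwise_def disjnt_def by blast

lemma maximal_subcluster_in_ch:
  "internal X \<Longrightarrow> Y \<in> F \<Longrightarrow> Y \<subset> X \<Longrightarrow> \<not> (\<exists>Z\<in>F. Y \<subset> Z \<and> Z \<subset> X) \<Longrightarrow> Y \<in> set (ch X)"
  using set_ch by blast

lemma rep_props:
  assumes "internal X"
  shows "{Inl (rep ch X)} \<in> set (ch X)"
    and "\<And>Y. Y \<in> set (ch X) \<Longrightarrow> Y \<noteq> {Inl (rep ch X)} \<Longrightarrow> rep ch X \<in> boundary Y"
    and "\<And>Y. Y \<in> F \<Longrightarrow> rep ch X \<in> boundary Y \<Longrightarrow> Y \<subset> X"
proof -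
  obtain r where r: "{Inl r} \<in> set (ch X)" "\<forall>Y\<in>set (ch X). Y \<noteq> {Inl r} \<longrightarrow> r \<in> boundary Y"
    "\<forall>Y\<in>F. r \<in> boundary Y \<longrightarrow> Y \<subset> X"
    using ch_props[OF assms, THEN conjunct2, THEN conjunct2, THEN conjunct2, THEN conjunct2]
    by blast
  have "rep ch X = r" unfolding rep_def
  proof (rule the_equality)
    fix r' assume "{Inl r'} \<in> set (ch X)"
    then show "r' = r" using r(2) by fastforce
  qed (fact r(1))
  then show "{Inl (rep ch X)} \<in> set (ch X)"
    and "\<And>Y. Y \<in> set (ch X) \<Longrightarrow> Y \<noteq> {Inl (rep ch X)} \<Longrightarrow> rep ch X \<in> boundary Y"
    and "\<And>Y. Y \<in> F \<Longrightarrow> rep ch X \<in> boundary Y \<Longrightarrow> Y \<subset> X"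
    using r by auto
qed

lemma rep_notin_child:
  assumes "internal X" "Y \<in> set (ch X)" "Y \<noteq> {Inl (rep ch X)}"
  shows "Inl (rep ch X) \<notin> Y"
  using children_disjoint[OF assms(1,2) rep_props(1)[OF assms(1)]] assms(3) by blast

lemma rep_in_cluster: "internal X \<Longrightarrow> Inl (rep ch X) \<in> X"
  using rep_props(1) child_in_F by blast

lemma rep_notin_boundary: "internal X \<Longrightarrow> rep ch X \<notin> boundary X"
  using rep_in_cluster by (auto simp: boundary_def)

text \<open>The smallest cluster properly containing {Inl u} has {Inl u} as a child.\<close>

lemma smallest_cluster_rep:
  assumes W: "W \<in> F" "Inl u \<in> W" "W \<noteq> {Inl u}"
  shows "\<exists>Z. internal Z \<and> Z \<subseteq> W \<and> rep ch Z = u"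
proof -
  let ?S = "{Z\<in>F. Inl u \<in> Z \<and> Z \<noteq> {Inl u}}"
  have W_in: "W \<in> ?S" using W by auto
  obtain Z where Z: "Z \<in> ?S" and min: "\<And>Z'. Z' \<in> ?S \<Longrightarrow> card Z \<le> card Z'"
    using ex_has_least_nat[of "\<lambda>Z. Z \<in> ?S" W card, OF W_in] by blast
  have ZF: "Z \<in> F" and uZ: "Inl u \<in> Z" using Z by auto
  have intZ: "internal Z" using Z unfolding internal_def by blast
  have no_between: "\<not> Z' \<subset> Z" if "Z' \<in> ?S" for Z'
  proof
    assume "Z' \<subset> Z"
    then have "card Z' < card Z" by (rule psubset_card_mono[OF finite_cluster[OF ZF]])
    with min[OF that] show False by simp
  qed
  have "Z \<subseteq> W"
    using laminar[OF ZF W(1)] uZ W(2) no_between[OF W_in] by blast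
  have uel: "Inl u \<in> elems V E" using cluster_subset_elems[OF ZF] uZ by blast
  have "{Inl u} \<in> set (ch Z)"
  proof (rule maximal_subcluster_in_ch[OF intZ singleton_in_F[OF uel]])
    show "{Inl u} \<subset> Z" using Z by blast
    show "\<not> (\<exists>Z'\<in>F. {Inl u} \<subset> Z' \<and> Z' \<subset> Z)" using no_between by blast
  qed
  then have "rep ch Z = u" using rep_props(2)[OF intZ, of "{Inl u}"] by auto
  then show ?thesis using intZ \<open>Z \<subseteq> W\<close> by blast
qed

text \<open>A boundary vertex u of Y inside X lies in a sibling Y'. Unless Y' is the representative,
  u is the representative of some cluster Z \<subseteq> Y', and then Y \<subset> Z by the RC tree property,
  contradicting the disjointness of Y and Y'.\<close>

lemma boundary_child_subset:
  assumes X: "internal X" and Y: "Y \<in> set (ch X)" "Y \<noteq> {Inl (rep ch X)}"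
  shows "boundary Y \<subseteq> insert (rep ch X) (boundary X)"
proof
  fix u assume u: "u \<in> boundary Y"
  then obtain e where e: "Inr e \<in> Y" "u \<in> e" and uY: "Inl u \<notin> Y" by (auto simp: boundary_def)
  have YX: "Y \<subset> X" and YF: "Y \<in> F" using child_in_F[OF X Y(1)] by auto
  show "u \<in> insert (rep ch X) (boundary X)"
  proof (cases "Inl u \<in> X")
    case False
    then show ?thesis using e YX by (auto simp: boundary_def)
  next
    case True
    then obtain Y' where Y': "Y' \<in> set (ch X)" "Inl u \<in> Y'" using Union_ch[OF X] by blast
    show ?thesis
    proof (cases "Y' = {Inl (rep ch X)}")
      case True then show ?thesis using Y' by auto
    next
      case False
      have "Y' \<noteq> {Inl u}" using rep_props(2)[OF X Y'(1) False] by auto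
      then obtain Z where Z: "internal Z" "Z \<subseteq> Y'" "rep ch Z = u"
        using smallest_cluster_rep[of Y' u] Y' child_in_F[OF X] by blast
      have "Y \<subset> Z" using rep_props(3)[OF Z(1) YF] Z(3) u by simp
      then have "Y \<subseteq> Y'" using Z(2) by blast
      moreover have "Y' \<noteq> Y" using Y' uY by blast
      then have "Y \<inter> Y' = {}" using children_disjoint[OF X Y(1) Y'(1)] by blast
      ultimately show ?thesis using cluster_nonempty[OF YF] by blast
    qed
  qed
qed

lemma edge_at_inner_vertex_in_child:
  assumes P: "internal P" and Y: "Y \<in> set (ch P)" "Y \<noteq> {Inl (rep ch P)}"
    and x: "Inl x \<in> Y" and e: "Inr e \<in> P" "x \<in> e"
  shows "Inr e \<in> Y"
proof (rule ccontr)
  assume ne: "Inr e \<notin> Y"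
  obtain Y' where Y': "Y' \<in> set (ch P)" "Inr e \<in> Y'" using Union_ch[OF P] e(1) by blast
  have "Inl x \<notin> Y'" using children_disjoint[OF P Y(1) Y'(1)] x ne Y'(2) by blast
  then have "x \<in> boundary Y'" using Y'(2) e(2) by (auto simp: boundary_def)
  moreover have "Y' \<noteq> {Inl (rep ch P)}" using Y'(2) by blast
  ultimately have "x \<in> insert (rep ch P) (boundary P)"
    using boundary_child_subset[OF P Y'(1)] by blast
  moreover have "x \<noteq> rep ch P" using rep_notin_child[OF P Y] x by blast
  moreover have "x \<notin> boundary P" using x child_in_F[OF P Y(1)] by (auto simp: boundary_def)
  ultimately show False by blast
qed

section \<open>Connectivity inside clusters\<close>

definition cluster_verts :: "'a cluster \<Rightarrow> 'a set" where
  "cluster_verts X = {u. Inl u \<in> X}"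

definition cluster_edges :: "'a cluster \<Rightarrow> 'a set set" where
  "cluster_edges X = {e. Inr e \<in> X}"

definition linked :: "'a cluster \<Rightarrow> ('a \<times> 'a) set" where
  "linked X = (adj_rel (J \<inter> cluster_edges X))\<^sup>*"

definition reach_weight :: "('a \<Rightarrow> real) \<Rightarrow> 'a cluster \<Rightarrow> 'a \<Rightarrow> real" where
  "reach_weight cw X b = (\<Sum>u\<in>{u\<in>cluster_verts X. (b, u) \<in> linked X}. cw u)"

lemma finite_cluster_verts: "X \<in> F \<Longrightarrow> finite (cluster_verts X)"
proof -
  assume "X \<in> F"
  then have "cluster_verts X \<subseteq> V"
    using cluster_subset_elems unfolding cluster_verts_def elems_def by auto
  then show ?thesis using finite_V finite_subset by blast
qed

lemma linked_refl [simp]: "(x, x) \<in> linked X"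
  unfolding linked_def by simp

lemma linked_sym: "(x, y) \<in> linked X \<Longrightarrow> (y, x) \<in> linked X"
  unfolding linked_def by (rule symD[OF sym_rtrancl[OF sym_adj_rel]])

lemma linked_trans: "(x, y) \<in> linked X \<Longrightarrow> (y, z) \<in> linked X \<Longrightarrow> (x, z) \<in> linked X"
  unfolding linked_def by (rule rtrancl_trans)

lemma linked_mono: "Y \<subseteq> X \<Longrightarrow> linked Y \<subseteq> linked X"
  unfolding linked_def by (rule rtrancl_mono) (auto simp: adj_rel_def cluster_edges_def)

lemma linked_edge: "{x, y} \<in> J \<Longrightarrow> Inr {x, y} \<in> X \<Longrightarrow> (x, y) \<in> linked X"
  unfolding linked_def by (rule r_into_rtrancl) (simp add: adj_rel_def cluster_edges_def)

lemma linked_child_subset: "internal P \<Longrightarrow> Y \<in> set (ch P) \<Longrightarrow> linked Y \<subseteq> linked P"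
  using linked_mono child_in_F by blast

lemma adj_rel_cluster_edges:
  "(x, y) \<in> adj_rel (J \<inter> cluster_edges P) \<Longrightarrow> {x, y} \<in> J \<and> Inr {x, y} \<in> P"
  by (auto simp: adj_rel_def cluster_edges_def)

lemma linked_leaves_child:
  assumes P: "internal P" and Y: "Y \<in> set (ch P)" "Y \<noteq> {Inl (rep ch P)}" and u: "Inl u \<in> Y"
    and ux: "(u, x) \<in> linked P"
  shows "(Inl x \<in> Y \<and> (u, x) \<in> linked Y) \<or>
    (\<exists>m\<in>boundary Y. (u, m) \<in> linked Y \<and> (m, x) \<in> linked P)"
  using ux[unfolded linked_def]
proof (induction rule: rtrancl_induct)
  case (step x y)
  have e: "{x, y} \<in> J" "Inr {x, y} \<in> P" using adj_rel_cluster_edges[OF step(2)] by auto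
  from step(3) show ?case
  proof
    assume x: "Inl x \<in> Y \<and> (u, x) \<in> linked Y"
    have xy: "Inr {x, y} \<in> Y"
      using edge_at_inner_vertex_in_child[OF P Y conjunct1[OF x] e(2)] by simp
    then have "(u, y) \<in> linked Y" using linked_trans linked_edge e(1) x by blast
    moreover have "Inl y \<in> Y \<or> y \<in> boundary Y" using xy by (auto simp: boundary_def)
    ultimately show ?case by auto
  next
    assume "\<exists>m\<in>boundary Y. (u, m) \<in> linked Y \<and> (m, x) \<in> linked P"
    then obtain m where "m \<in> boundary Y" "(u, m) \<in> linked Y" "(m, x) \<in> linked P" by blast
    moreover have "(m, y) \<in> linked P"
      by (rule linked_trans[OF \<open>(m, x) \<in> linked P\<close> linked_edge[OF e]])
    ultimately show ?case by blast
  qed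
qed (use u in simp)

text \<open>The contracted graph of P, in which every child other than the representative is replaced
  by the links between its boundary vertices.\<close>

definition nodes :: "'a cluster \<Rightarrow> 'a set" where
  "nodes P = insert (rep ch P) (boundary P)"

definition child_links :: "'a cluster \<Rightarrow> ('a \<times> 'a) set" where
  "child_links P = {(p, q). p \<noteq> q \<and> (\<exists>Y\<in>set (ch P). Y \<noteq> {Inl (rep ch P)} \<and>
     p \<in> boundary Y \<and> q \<in> boundary Y \<and> (p, q) \<in> linked Y)}"

lemma rep_in_nodes: "rep ch P \<in> nodes P"
  by (simp add: nodes_def)

lemma boundary_child_nodes:
  "internal P \<Longrightarrow> Y \<in> set (ch P) \<Longrightarrow> Y \<noteq> {Inl (rep ch P)} \<Longrightarrow> boundary Y \<subseteq> nodes P"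
  unfolding nodes_def by (rule boundary_child_subset)

lemma child_links_irrefl: "(x, x) \<notin> child_links P"
  unfolding child_links_def by simp

lemma child_links_subset: "internal P \<Longrightarrow> child_links P \<subseteq> nodes P \<times> nodes P"
  unfolding child_links_def using boundary_child_nodes by blast

lemma rtrancl_child_links_linked: "internal P \<Longrightarrow> (child_links P)\<^sup>* \<subseteq> linked P"
proof -
  assume P: "internal P"
  have "child_links P \<subseteq> linked P"
  proof
    fix z assume "z \<in> child_links P"
    then obtain p q Y where "z = (p, q)" "Y \<in> set (ch P)" "(p, q) \<in> linked Y"
      unfolding child_links_def by blast
    then show "z \<in> linked P" using linked_child_subset[OF P] by blast
  qed
  then have "(child_links P)\<^sup>* \<subseteq> (linked P)\<^sup>*" by (rule rtrancl_mono)
  then show ?thesis unfolding linked_def by simp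
qed

lemma node_notin_child:
  "internal P \<Longrightarrow> Y \<in> set (ch P) \<Longrightarrow> Y \<noteq> {Inl (rep ch P)} \<Longrightarrow> x \<in> nodes P \<Longrightarrow> Inl x \<notin> Y"
proof -
  assume P: "internal P" and Y: "Y \<in> set (ch P)" "Y \<noteq> {Inl (rep ch P)}" and x: "x \<in> nodes P"
  show "Inl x \<notin> Y"
  proof (cases "x = rep ch P")
    case True then show ?thesis using rep_notin_child[OF P Y] by simp
  next
    case False
    then have "Inl x \<notin> P" using x unfolding nodes_def boundary_def by simp
    then show ?thesis using child_in_F[OF P Y(1)] by blast
  qed
qed

definition reached_via_children :: "'a cluster \<Rightarrow> 'a \<Rightarrow> 'a \<Rightarrow> bool" where
  "reached_via_children P p x \<longleftrightarrow> (x \<in> nodes P \<and> (p, x) \<in> (child_links P)\<^sup>*) \<or>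
     (\<exists>Y\<in>set (ch P). Y \<noteq> {Inl (rep ch P)} \<and> Inl x \<in> Y \<and>
        (\<exists>m\<in>boundary Y. (p, m) \<in> (child_links P)\<^sup>* \<and> (m, x) \<in> linked Y))"

lemma reached_via_children_step:
  assumes P: "internal P" and Y: "Y \<in> set (ch P)" "Y \<noteq> {Inl (rep ch P)}"
    and m: "m \<in> boundary Y" "(p, m) \<in> (child_links P)\<^sup>*" and my: "(m, y) \<in> linked Y"
    and y: "Inl y \<in> Y \<or> y \<in> boundary Y"
  shows "reached_via_children P p y"
proof (cases "Inl y \<in> Y")
  case True
  then show ?thesis unfolding reached_via_children_def using Y m my by blast
next
  case False
  then have yb: "y \<in> boundary Y" using y by blast
  have "(p, y) \<in> (child_links P)\<^sup>*"
  proof (cases "m = y")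
    case False
    then have "(m, y) \<in> child_links P" unfolding child_links_def using Y m(1) yb my by blast
    then show ?thesis using m(2) by simp
  qed (use m in simp)
  then show ?thesis
    unfolding reached_via_children_def using yb boundary_child_nodes[OF P Y] by blast
qed

text \<open>Starting at a node, a path inside P can only enter a child through one of its boundary
  vertices.\<close>

lemma linked_from_node:
  assumes P: "internal P" and p: "p \<in> nodes P" and px: "(p, x) \<in> linked P"
  shows "reached_via_children P p x"
  using px[unfolded linked_def]
proof (induction rule: rtrancl_induct)
  case base
  then show ?case using p by (simp add: reached_via_children_def)
next
  case (step x y)
  have e: "{x, y} \<in> J" "Inr {x, y} \<in> P" using adj_rel_cluster_edges[OF step(2)] by auto
  from step(3)[unfolded reached_via_children_def] show ?case
  proof (elim disjE bexE conjE)
    assume x: "x \<in> nodes P" and px: "(p, x) \<in> (child_links P)\<^sup>*"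
    obtain Y where Y: "Y \<in> set (ch P)" "Inr {x, y} \<in> Y" using Union_ch[OF P] e(2) by blast
    have Yr: "Y \<noteq> {Inl (rep ch P)}" using Y(2) by blast
    have "Inl x \<notin> Y" using node_notin_child[OF P Y(1) Yr x] .
    then have "x \<in> boundary Y" using Y(2) by (auto simp: boundary_def)
    moreover have "Inl y \<in> Y \<or> y \<in> boundary Y" using Y(2) by (auto simp: boundary_def)
    ultimately show ?thesis
      using reached_via_children_step[OF P Y(1) Yr _ px] linked_edge[OF e(1) Y(2)] by blast
  next
    fix Y m assume Y: "Y \<in> set (ch P)" "Y \<noteq> {Inl (rep ch P)}" "Inl x \<in> Y"
      and m: "m \<in> boundary Y" "(p, m) \<in> (child_links P)\<^sup>*" "(m, x) \<in> linked Y"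
    have xy: "Inr {x, y} \<in> Y" using edge_at_inner_vertex_in_child[OF P Y(1,2,3) e(2)] by simp
    then have "(m, y) \<in> linked Y" using linked_trans[OF m(3)] linked_edge[OF e(1)] by blast
    moreover have "Inl y \<in> Y \<or> y \<in> boundary Y" using xy by (auto simp: boundary_def)
    ultimately show ?thesis using reached_via_children_step[OF P Y(1,2) m(1,2)] by blast
  qed
qed

lemma linked_nodes_iff:
  assumes P: "internal P" and "p \<in> nodes P" "q \<in> nodes P"
  shows "(p, q) \<in> linked P \<longleftrightarrow> (p, q) \<in> (child_links P)\<^sup>*"
proof
  assume "(p, q) \<in> linked P"
  from linked_from_node[OF P assms(2) this] show "(p, q) \<in> (child_links P)\<^sup>*"
    using node_notin_child[OF P _ _ assms(3)] unfolding reached_via_children_def by blast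
qed (use rtrancl_child_links_linked[OF P] in blast)

lemma linked_node_child_vertex_iff:
  assumes P: "internal P" and p: "p \<in> nodes P" and Y: "Y \<in> set (ch P)" "Y \<noteq> {Inl (rep ch P)}"
    and u: "Inl u \<in> Y"
  shows "(p, u) \<in> linked P \<longleftrightarrow> (\<exists>m\<in>boundary Y. (p, m) \<in> (child_links P)\<^sup>* \<and> (m, u) \<in> linked Y)"
proof
  assume "(p, u) \<in> linked P"
  from linked_from_node[OF P p this]
  show "\<exists>m\<in>boundary Y. (p, m) \<in> (child_links P)\<^sup>* \<and> (m, u) \<in> linked Y"
    unfolding reached_via_children_def
    using node_notin_child[OF P Y] u children_disjoint[OF P Y(1)] by blast
next
  assume "\<exists>m\<in>boundary Y. (p, m) \<in> (child_links P)\<^sup>* \<and> (m, u) \<in> linked Y"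
  then obtain m where "(p, m) \<in> linked P" "(m, u) \<in> linked P"
    using rtrancl_child_links_linked[OF P] linked_child_subset[OF P Y(1)] by blast
  then show "(p, u) \<in> linked P" by (rule linked_trans)
qed

lemma linked_stays_in_child:
  assumes P: "internal P" and C: "C \<in> set (ch P)" "C \<noteq> {Inl (rep ch P)}" and v: "Inl v \<in> C"
    and no_exit: "\<And>m. m \<in> boundary C \<Longrightarrow> (v, m) \<notin> linked C"
  shows "(v, x) \<in> linked P \<longleftrightarrow> Inl x \<in> C \<and> (v, x) \<in> linked C"
proof
  assume "(v, x) \<in> linked P"
  from linked_leaves_child[OF P C v this] show "Inl x \<in> C \<and> (v, x) \<in> linked C"
    using no_exit by blast
qed (use linked_child_subset[OF P C(1)] in blast)

definition node :: "'a cluster \<Rightarrow> nat \<Rightarrow> 'a" where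
  "node P i = (if i = 0 then rep ch P else bd P ! (i - 1))"

definition rep_index :: "'a cluster \<Rightarrow> nat" where
  "rep_index P = idx (ch P) {Inl (rep ch P)}"

lemma node_0 [simp]: "node P 0 = rep ch P"
  by (simp add: node_def)

lemma node_Suc: "node P (Suc i) = bd P ! i"
  by (simp add: node_def)

lemma length_bd_internal: "internal P \<Longrightarrow> length (bd P) \<le> 2"
  using length_bd_le_2 internal_in_F by blast

lemma bd_in_nodes: "internal P \<Longrightarrow> i < length (bd P) \<Longrightarrow> bd P ! i \<in> nodes P"
  using set_bd[OF internal_in_F] nth_mem unfolding nodes_def by blast

lemma node_in_nodes: "internal P \<Longrightarrow> i \<le> length (bd P) \<Longrightarrow> node P i \<in> nodes P"
  using bd_in_nodes[of P "i - 1"] by (cases i) (auto simp: node_def rep_in_nodes)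

lemma slot_node:
  assumes P: "internal P" and b: "b \<in> nodes P"
  shows "slot ch bd P b \<le> length (bd P) \<and> node P (slot ch bd P b) = b"
proof (cases "b = rep ch P")
  case False
  then have "b \<in> set (bd P)" using b set_bd[OF internal_in_F[OF P]] unfolding nodes_def by auto
  from idx_nth[OF this] show ?thesis using False by (simp add: slot_def node_def)
qed (simp add: slot_def)

lemma slot_of_node:
  assumes P: "internal P" and i: "i \<le> length (bd P)"
  shows "slot ch bd P (node P i) = i"
proof (cases i)
  case (Suc k)
  then have "bd P ! k \<in> boundary P" using set_bd[OF internal_in_F[OF P]] i nth_mem by fastforce
  then have "bd P ! k \<noteq> rep ch P" using rep_notin_boundary[OF P] by auto
  then show ?thesis using Suc idx_nth_distinct[OF distinct_bd[OF internal_in_F[OF P]], of k] i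
    by (simp add: slot_def node_def)
qed (simp add: slot_def)

lemma node_inj:
  "internal P \<Longrightarrow> i \<le> length (bd P) \<Longrightarrow> j \<le> length (bd P) \<Longrightarrow> node P i = node P j \<Longrightarrow> i = j"
  using slot_of_node by metis

lemma nodes_node: "internal P \<Longrightarrow> b \<in> nodes P \<Longrightarrow> \<exists>i\<le>length (bd P). b = node P i"
  using slot_node by metis

lemma finite_nodes: "internal P \<Longrightarrow> finite (nodes P)"
  unfolding nodes_def using set_bd[OF internal_in_F] by (metis List.finite_set finite_insert)

lemma card_nodes_le_3:
  assumes P: "internal P"
  shows "card (nodes P) \<le> 3"
proof -
  have "card (nodes P) \<le> Suc (card (boundary P))"
    unfolding nodes_def using set_bd[OF internal_in_F[OF P]]
    by (metis List.finite_set card_insert_if le_SucI le_refl)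
  then show ?thesis using card_boundary_le_2[OF internal_in_F[OF P]] by simp
qed

lemma rep_index_ch:
  assumes P: "internal P"
  shows "rep_index P < length (ch P)" "ch P ! rep_index P = {Inl (rep ch P)}"
  using idx_nth[OF rep_props(1)[OF P]] unfolding rep_index_def by auto

lemma non_rep_child:
  assumes P: "internal P" and j: "j < length (ch P)" "j \<noteq> rep_index P"
  shows "ch P ! j \<in> set (ch P)" "ch P ! j \<noteq> {Inl (rep ch P)}"
proof -
  show "ch P ! j \<in> set (ch P)" using j by simp
  show "ch P ! j \<noteq> {Inl (rep ch P)}"
  proof
    assume "ch P ! j = {Inl (rep ch P)}"
    then have "rep_index P = j"
      unfolding rep_index_def using idx_nth_distinct[OF distinct_ch[OF P] j(1)] by simp
    then show False using j by simp
  qed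
qed

lemma non_rep_child_facts:
  assumes P: "internal P" and Y: "Y \<in> set (ch P)" "Y \<noteq> {Inl (rep ch P)}"
  shows "rep ch P \<in> boundary Y" "boundary Y \<subseteq> nodes P" "\<not> (\<exists>x. Y = {Inl x})"
    "1 \<le> length (bd Y)" "length (bd Y) \<le> 2" "Y \<in> F" "set (bd Y) = boundary Y" "distinct (bd Y)"
proof -
  show r: "rep ch P \<in> boundary Y" using rep_props(2)[OF P Y] .
  show "boundary Y \<subseteq> nodes P" using boundary_child_nodes[OF P Y] .
  show "\<not> (\<exists>x. Y = {Inl x})" using r by auto
  show YF: "Y \<in> F" using child_in_F[OF P Y(1)] by simp
  show "set (bd Y) = boundary Y" using set_bd[OF YF] .
  show "distinct (bd Y)" using distinct_bd[OF YF] .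
  show "1 \<le> length (bd Y)" using r set_bd[OF YF] by (cases "bd Y") auto
  show "length (bd Y) \<le> 2" using length_bd_le_2[OF YF] .
qed

lemma shape_eq:
  "shape ch bd P = (length (bd P), rep_index P, map (\<lambda>Y. map (slot ch bd P) (bd Y)) (ch P))"
  by (simp add: shape_def rep_index_def)

lemma rtrancl_child_links_iff:
  assumes P: "internal P" and a: "a \<le> length (bd P)" and b: "b \<le> length (bd P)" and ab: "a \<noteq> b"
  shows "(node P a, node P b) \<in> (child_links P)\<^sup>* \<longleftrightarrow>
    (node P a, node P b) \<in> child_links P \<or>
    (3 - a - b \<le> length (bd P) \<and> (node P a, node P (3 - a - b)) \<in> child_links P \<and>
     (node P (3 - a - b), node P b) \<in> child_links P)"
proof
  assume "(node P a, node P b) \<in> (child_links P)\<^sup>*"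
  from rtrancl_card_le_3[OF finite_nodes[OF P] card_nodes_le_3[OF P] child_links_subset[OF P]
      child_links_irrefl this]
  show "(node P a, node P b) \<in> child_links P \<or>
    (3 - a - b \<le> length (bd P) \<and> (node P a, node P (3 - a - b)) \<in> child_links P \<and>
     (node P (3 - a - b), node P b) \<in> child_links P)"
  proof (elim disjE exE conjE)
    assume "node P a = node P b"
    then show ?thesis using node_inj[OF P a b] ab by simp
  next
    fix s assume s1: "(node P a, s) \<in> child_links P" and s2: "(s, node P b) \<in> child_links P"
    obtain i where i: "i \<le> length (bd P)" "s = node P i"
      using nodes_node[OF P] child_links_subset[OF P] s1 by blast
    have "i \<noteq> a" "i \<noteq> b" using s1 s2 i child_links_irrefl by auto
    then have "i = 3 - a - b" using i(1) a b ab length_bd_internal[OF P] by arith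
    then show ?thesis using s1 s2 i by simp
  qed simp
qed (meson r_into_rtrancl rtrancl_trans)

section \<open>Correctness of combine\<close>

definition value_ok :: "('a \<Rightarrow> real) \<Rightarrow> 'a cluster \<Rightarrow> real list \<Rightarrow> bool" where
  "value_ok cw X v \<longleftrightarrow> length v = 4 \<and> (\<forall>r. X = {Inl r} \<longrightarrow> v ! 0 = cw r) \<and>
     (\<not> (\<exists>r. X = {Inl r}) \<longrightarrow>
        (\<forall>i<length (bd X). v ! Suc i = reach_weight cw X (bd X ! i)) \<and>
        (length (bd X) = 2 \<longrightarrow> v ! 3 = of_bool ((bd X ! 0, bd X ! 1) \<in> linked X)))"

definition children_env ::
  "('a \<Rightarrow> real) \<Rightarrow> ('a cluster \<Rightarrow> real list) \<Rightarrow> 'a cluster \<Rightarrow> nat \<Rightarrow> real list \<Rightarrow> bool" where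
  "children_env cw val P off env \<longleftrightarrow>
     (\<exists>pre. env = pre @ concat (map val (ch P)) \<and> length pre = off) \<and>
     (\<forall>Y\<in>set (ch P). value_ok cw Y (val Y))"

lemma eval_cell_children_env:
  assumes env: "children_env cw val P off env" and "j < length (ch P)" "x < 4"
  shows "eval (cell off j x) env = val (ch P ! j) ! x"
proof -
  obtain pre where pre: "env = pre @ concat (map val (ch P))" "length pre = off"
    and vi: "\<forall>Y\<in>set (ch P). value_ok cw Y (val Y)" using env unfolding children_env_def by blast
  have l4: "\<And>v. v \<in> set (map val (ch P)) \<Longrightarrow> length v = 4" using vi by (auto simp: value_ok_def)
  have "eval (cell off j x) (pre @ concat (map val (ch P))) = map val (ch P) ! j ! x"
    by (rule eval_cell[OF pre(2) l4]) (use assms(2,3) in simp_all)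
  then show ?thesis using assms(2) pre(1) by simp
qed

lemma eval_child_weight:
  assumes env: "children_env cw val P off env" and P: "internal P"
    and j: "j < length (ch P)" "j \<noteq> rep_index P" and i: "i < length (bd (ch P ! j))"
  shows "eval (cell off j (Suc i)) env = reach_weight cw (ch P ! j) (bd (ch P ! j) ! i)"
proof -
  have Y: "ch P ! j \<in> set (ch P)" "ch P ! j \<noteq> {Inl (rep ch P)}" using non_rep_child[OF P j] by auto
  have vi: "value_ok cw (ch P ! j) (val (ch P ! j))"
    using env Y(1) unfolding children_env_def by blast
  have ns: "\<not> (\<exists>x. ch P ! j = {Inl x})" using non_rep_child_facts(3)[OF P Y] .
  have "Suc i < 4" using i non_rep_child_facts(5)[OF P Y] by simp
  then show ?thesis
    using eval_cell_children_env[OF env j(1), of "Suc i"] vi ns i unfolding value_ok_def by simp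
qed

lemma eval_child_flag:
  assumes env: "children_env cw val P off env" and P: "internal P"
    and j: "j < length (ch P)" "j \<noteq> rep_index P" and l2: "length (bd (ch P ! j)) = 2"
  shows "eval (cell off j 3) env =
    of_bool ((bd (ch P ! j) ! 0, bd (ch P ! j) ! 1) \<in> linked (ch P ! j))"
proof -
  have Y: "ch P ! j \<in> set (ch P)" "ch P ! j \<noteq> {Inl (rep ch P)}" using non_rep_child[OF P j] by auto
  have vi: "value_ok cw (ch P ! j) (val (ch P ! j))"
    using env Y(1) unfolding children_env_def by blast
  have ns: "\<not> (\<exists>x. ch P ! j = {Inl x})" using non_rep_child_facts(3)[OF P Y] .
  show ?thesis
    using eval_cell_children_env[OF env j(1), of 3] vi ns l2 unfolding value_ok_def by simp
qed

definition child_links_slots :: "'a cluster \<Rightarrow> nat \<Rightarrow> nat \<Rightarrow> nat \<Rightarrow> bool" where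
  "child_links_slots P a b j \<longleftrightarrow> j \<noteq> rep_index P \<and>
     (map (slot ch bd P) (bd (ch P ! j)) = [a, b] \<or> map (slot ch bd P) (bd (ch P ! j)) = [b, a]) \<and>
     (bd (ch P ! j) ! 0, bd (ch P ! j) ! 1) \<in> linked (ch P ! j)"

lemma child_links_slots_child_links:
  assumes P: "internal P" and jl: "j < length (ch P)" and links: "child_links_slots P a b j"
  shows "a \<le> length (bd P) \<and> b \<le> length (bd P) \<and> (node P a, node P b) \<in> child_links P"
proof -
  have jr: "j \<noteq> rep_index P"
    and slots: "map (slot ch bd P) (bd (ch P ! j)) = [a, b] \<or>
      map (slot ch bd P) (bd (ch P ! j)) = [b, a]"
    and linked: "(bd (ch P ! j) ! 0, bd (ch P ! j) ! 1) \<in> linked (ch P ! j)"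
    using links unfolding child_links_slots_def by auto
  define Y where "Y = ch P ! j"
  have Y: "Y \<in> set (ch P)" "Y \<noteq> {Inl (rep ch P)}" using non_rep_child[OF P jl jr] Y_def by auto
  note facts = non_rep_child_facts[OF P Y]
  from slots obtain y0 y1 where bdY: "bd Y = [y0, y1]"
    and sl: "(slot ch bd P y0 = a \<and> slot ch bd P y1 = b) \<or>
      (slot ch bd P y0 = b \<and> slot ch bd P y1 = a)"
    unfolding Y_def[symmetric] by (auto simp: map_eq_Cons_conv)
  have yb: "y0 \<in> boundary Y" "y1 \<in> boundary Y" using facts(7) bdY by auto
  have yN: "y0 \<in> nodes P" "y1 \<in> nodes P" using yb facts(2) by auto
  have y01: "y0 \<noteq> y1" using facts(8) bdY by simp
  have "(y0, y1) \<in> linked Y" using linked bdY unfolding Y_def[symmetric] by simp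
  then have "(y0, y1) \<in> child_links P" "(y1, y0) \<in> child_links P"
    unfolding child_links_def using Y yb y01 linked_sym[of y0 y1 Y] by blast+
  note n0 = slot_node[OF P yN(1)] and n1 = slot_node[OF P yN(2)]
  from sl show ?thesis
  proof
    assume "slot ch bd P y0 = a \<and> slot ch bd P y1 = b"
    then show ?thesis using n0 n1 \<open>(y0, y1) \<in> child_links P\<close> by auto
  next
    assume "slot ch bd P y0 = b \<and> slot ch bd P y1 = a"
    then show ?thesis using n0 n1 \<open>(y1, y0) \<in> child_links P\<close> by auto
  qed
qed

lemma child_links_ex_child_links_slots:
  assumes P: "internal P" and a: "a \<le> length (bd P)" and b: "b \<le> length (bd P)"
    and link: "(node P a, node P b) \<in> child_links P"
  shows "\<exists>j<length (ch P). child_links_slots P a b j"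
proof -
  from link obtain Y where Y: "Y \<in> set (ch P)" "Y \<noteq> {Inl (rep ch P)}"
    and nb: "node P a \<in> boundary Y" "node P b \<in> boundary Y" and ne: "node P a \<noteq> node P b"
    and linked: "(node P a, node P b) \<in> linked Y" unfolding child_links_def by blast
  note facts = non_rep_child_facts[OF P Y]
  obtain j where j: "j < length (ch P)" "ch P ! j = Y" using Y(1) by (auto simp: in_set_conv_nth)
  have jr: "j \<noteq> rep_index P" using j Y(2) rep_index_ch[OF P] by auto
  have "boundary Y = {node P a, node P b}"
    using card_le_2_doubleton[OF _ card_boundary_le_2[OF facts(6)] nb ne] facts(7)
    by (metis List.finite_set)
  then have "bd Y = [node P a, node P b] \<or> bd Y = [node P b, node P a]"
    using distinct_set_doubleton[OF facts(8)] facts(7) ne by simp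
  moreover have sa: "slot ch bd P (node P a) = a" "slot ch bd P (node P b) = b"
    using slot_of_node[OF P] a b by auto
  ultimately show ?thesis
  proof (elim disjE)
    assume "bd Y = [node P a, node P b]"
    then show ?thesis using j jr sa linked by (intro exI[of _ j]) (auto simp: child_links_slots_def)
  next
    assume "bd Y = [node P b, node P a]"
    then show ?thesis
      using j jr sa linked_sym[OF linked] by (intro exI[of _ j]) (auto simp: child_links_slots_def)
  qed
qed

lemma eval_child_link_expr:
  assumes env: "children_env cw val P off env" and P: "internal P"
  shows "eval (child_link_expr off (shape ch bd P) a b) env =
    of_bool (a \<le> length (bd P) \<and> b \<le> length (bd P) \<and> (node P a, node P b) \<in> child_links P)"
proof -
  define slots where "slots = (\<lambda>j. map (slot ch bd P) (bd (ch P ! j)))"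
  define f where "f = (\<lambda>j. if j \<noteq> rep_index P \<and> (slots j = [a, b] \<or> slots j = [b, a])
    then cell off j 3 else Const 0)"
  have expr: "child_link_expr off (shape ch bd P) a b = or_exprs (map f [0..<length (ch P)])"
    unfolding child_link_expr_def shape_eq slots_def f_def
    by (auto intro!: arg_cong[of _ _ or_exprs] map_cong)
  have "eval (f j) env = of_bool (child_links_slots P a b j)" if "j \<in> set [0..<length (ch P)]" for j
  proof (cases "j \<noteq> rep_index P \<and> (slots j = [a, b] \<or> slots j = [b, a])")
    case True
    then have l2: "length (bd (ch P ! j)) = 2"
      unfolding slots_def by (metis length_map length_Cons list.size(3) numeral_2_eq_2)
    have "j < length (ch P)" using that by simp
    then show ?thesis
      using True eval_child_flag[OF env P _ _ l2]
        unfolding f_def slots_def child_links_slots_def by auto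
  qed (auto simp: f_def slots_def child_links_slots_def)
  then have "eval (or_exprs (map f [0..<length (ch P)])) env =
      of_bool (\<exists>j\<in>set [0..<length (ch P)]. child_links_slots P a b j)"
    by (rule eval_or_exprs)
  moreover have "(\<exists>j\<in>set [0..<length (ch P)]. child_links_slots P a b j) \<longleftrightarrow>
      a \<le> length (bd P) \<and> b \<le> length (bd P) \<and> (node P a, node P b) \<in> child_links P"
    using child_links_slots_child_links[OF P] child_links_ex_child_links_slots[OF P]
    by (metis atLeastLessThan_iff le0 set_upt)
  ultimately show ?thesis using expr by simp
qed

lemma eval_node_link_expr:
  assumes env: "children_env cw val P off env" and P: "internal P"
    and a: "a \<le> length (bd P)" and b: "b \<le> length (bd P)"
  shows "eval (node_link_expr off (shape ch bd P) a b) env =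
    of_bool ((node P a, node P b) \<in> (child_links P)\<^sup>*)"
proof (cases "a = b")
  case False
  have "3 - a - b \<noteq> a" "3 - a - b \<noteq> b" using False a b length_bd_internal[OF P] by arith+
  then show ?thesis
    unfolding node_link_expr_def rtrancl_child_links_iff[OF P a b False]
    using False eval_child_link_expr[OF env P] a b by (auto simp: eval_or_expr)
qed (simp add: node_link_expr_def)

lemma eval_node_link_expr_slot:
  assumes env: "children_env cw val P off env" and P: "internal P"
    and a: "a \<le> length (bd P)" and y: "y \<in> nodes P"
  shows "eval (node_link_expr off (shape ch bd P) a (slot ch bd P y)) env =
    of_bool ((node P a, y) \<in> (child_links P)\<^sup>*)"
  using eval_node_link_expr[OF env P a] slot_node[OF P y] by simp

definition reach_set :: "'a cluster \<Rightarrow> 'a \<Rightarrow> 'a set" where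
  "reach_set X x = {u\<in>cluster_verts X. (x, u) \<in> linked X}"

lemma reach_weight_reach_set: "reach_weight cw X x = sum cw (reach_set X x)"
  by (simp add: reach_weight_def reach_set_def)

lemma reach_set_linked: "(x, y) \<in> linked X \<Longrightarrow> reach_set X x = reach_set X y"
  unfolding reach_set_def using linked_trans linked_sym by blast

lemma reach_set_disjoint: "(x, y) \<notin> linked X \<Longrightarrow> reach_set X x \<inter> reach_set X y = {}"
  unfolding reach_set_def using linked_trans linked_sym by blast

lemma reached_in_child:
  assumes P: "internal P" and x: "x \<in> nodes P" and Y: "Y \<in> set (ch P)" "Y \<noteq> {Inl (rep ch P)}"
  shows "{u\<in>cluster_verts Y. (x, u) \<in> linked P} =
    (\<Union>m\<in>{m\<in>boundary Y. (x, m) \<in> (child_links P)\<^sup>*}. reach_set Y m)"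
  using linked_node_child_vertex_iff[OF P x Y] unfolding reach_set_def cluster_verts_def by auto

lemma sum_reached_unary_child:
  fixes cw :: "'a \<Rightarrow> real"
  assumes P: "internal P" and x: "x \<in> nodes P" and Y: "Y \<in> set (ch P)" "Y \<noteq> {Inl (rep ch P)}"
    and bdY: "bd Y = [y0]"
  shows "sum cw {u\<in>cluster_verts Y. (x, u) \<in> linked P} =
    of_bool ((x, y0) \<in> (child_links P)\<^sup>*) * sum cw (reach_set Y y0)"
proof -
  have "boundary Y = {y0}" using non_rep_child_facts(7)[OF P Y] bdY by simp
  then have "{u\<in>cluster_verts Y. (x, u) \<in> linked P} =
      (if (x, y0) \<in> (child_links P)\<^sup>* then reach_set Y y0 else {})"
    using reached_in_child[OF P x Y] by auto
  then show ?thesis by simp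
qed

lemma sum_reached_binary_child:
  fixes cw :: "'a \<Rightarrow> real"
  assumes P: "internal P" and x: "x \<in> nodes P" and Y: "Y \<in> set (ch P)" "Y \<noteq> {Inl (rep ch P)}"
    and bdY: "bd Y = [y0, y1]"
  shows "sum cw {u\<in>cluster_verts Y. (x, u) \<in> linked P} =
    of_bool ((x, y0) \<in> (child_links P)\<^sup>*) * sum cw (reach_set Y y0) +
    (1 - of_bool ((y0, y1) \<in> linked Y)) *
      (of_bool ((x, y1) \<in> (child_links P)\<^sup>*) * sum cw (reach_set Y y1))"
proof -
  define reached where "reached = (\<lambda>y. (x, y) \<in> (child_links P)\<^sup>*)"
  note facts = non_rep_child_facts[OF P Y]
  have bY: "boundary Y = {y0, y1}" and y01: "y0 \<noteq> y1" using facts(7,8) bdY by auto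
  have fin: "finite (reach_set Y m)" for m
    using finite_cluster_verts[OF facts(6)] unfolding reach_set_def by simp
  have same: "reach_set Y y0 = reach_set Y y1 \<and> reached y0 = reached y1"
    if "(y0, y1) \<in> linked Y"
  proof -
    have "(y0, y1) \<in> child_links P" "(y1, y0) \<in> child_links P"
      using that y01 Y bY linked_sym unfolding child_links_def by auto
    then have "reached y0 = reached y1"
      unfolding reached_def by (meson rtrancl.rtrancl_into_rtrancl)
    then show ?thesis using reach_set_linked[OF that] by simp
  qed
  have "{u\<in>cluster_verts Y. (x, u) \<in> linked P} =
      (if reached y0 then reach_set Y y0 else {}) \<union> (if reached y1 then reach_set Y y1 else {})"
    using reached_in_child[OF P x Y] unfolding bY reached_def by auto
  also have "sum cw \<dots> = of_bool (reached y0) * sum cw (reach_set Y y0) +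
      (1 - of_bool ((y0, y1) \<in> linked Y)) * (of_bool (reached y1) * sum cw (reach_set Y y1))"
    by (rule sum_two_parts[OF fin fin same reach_set_disjoint])
  finally show ?thesis unfolding reached_def .
qed

lemma eval_child_share_expr:
  assumes env: "children_env cw val P off env" and P: "internal P" and a: "a \<le> length (bd P)"
    and j: "j < length (ch P)" "j \<noteq> rep_index P"
  shows "eval (child_share_expr off (shape ch bd P) a j) env =
    sum cw {u\<in>cluster_verts (ch P ! j). (node P a, u) \<in> linked P}"
proof -
  define Y where "Y = ch P ! j"
  have Y: "Y \<in> set (ch P)" "Y \<noteq> {Inl (rep ch P)}" using non_rep_child[OF P j] Y_def by auto
  note facts = non_rep_child_facts[OF P Y]
  note x = node_in_nodes[OF P a]
  have expr: "child_share_expr off (shape ch bd P) a j = (case map (slot ch bd P) (bd Y) of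
        [p] \<Rightarrow> Mul (node_link_expr off (shape ch bd P) a p) (cell off j 1)
      | [p, q] \<Rightarrow> Add (Mul (node_link_expr off (shape ch bd P) a p) (cell off j 1))
          (Mul (not_expr (cell off j 3))
            (Mul (node_link_expr off (shape ch bd P) a q) (cell off j 2)))
      | _ \<Rightarrow> Const 0)"
    unfolding child_share_expr_def using j by (simp add: shape_eq Y_def)
  note node_link = eval_node_link_expr_slot[OF env P a]
  consider y0 where "bd Y = [y0]" | y0 y1 where "bd Y = [y0, y1]"
    using facts(4,5) by (cases "bd Y" rule: remdups_adj.cases) auto
  then show ?thesis
  proof cases
    case (1 y0)
    then have "y0 \<in> nodes P" using facts(2,7) by auto
    then show ?thesis
      using expr 1 node_link eval_child_weight[OF env P j, of 0] sum_reached_unary_child[OF P x Y 1]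
      by (simp add: Y_def reach_weight_reach_set)
  next
    case (2 y0 y1)
    then have "y0 \<in> nodes P" "y1 \<in> nodes P" using facts(2,7) by auto
    then show ?thesis
      using expr 2 node_link eval_child_flag[OF env P j]
        eval_child_weight[OF env P j, of 0] eval_child_weight[OF env P j, of 1]
        sum_reached_binary_child[OF P x Y 2]
      by (simp add: Y_def reach_weight_reach_set numeral_2_eq_2)
  qed
qed

lemma reach_from_rep_child:
  fixes cw :: "'a \<Rightarrow> real"
  assumes P: "internal P" and x: "x \<in> nodes P"
  shows "sum cw {u\<in>cluster_verts {Inl (rep ch P)}. (x, u) \<in> linked P} =
    of_bool ((x, rep ch P) \<in> (child_links P)\<^sup>*) * cw (rep ch P)"
proof -
  have "{u\<in>cluster_verts {Inl (rep ch P)}. (x, u) \<in> linked P} =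
      (if (x, rep ch P) \<in> linked P then {rep ch P} else {})"
    unfolding cluster_verts_def by auto
  then show ?thesis using linked_nodes_iff[OF P x rep_in_nodes] by simp
qed

lemma sum_reached_children:
  assumes P: "internal P"
  shows "sum cw {u\<in>cluster_verts P. (x, u) \<in> linked P} =
    (\<Sum>j<length (ch P). sum cw {u\<in>cluster_verts (ch P ! j). (x, u) \<in> linked P})"
proof -
  define A where "A = (\<lambda>Y. {u\<in>cluster_verts Y. (x, u) \<in> linked P})"
  have "{u\<in>cluster_verts P. (x, u) \<in> linked P} = (\<Union>Y\<in>set (ch P). A Y)"
    using Union_ch[OF P] unfolding A_def cluster_verts_def by blast
  moreover have "finite (A Y)" if "Y \<in> set (ch P)" for Y
    unfolding A_def using finite_cluster_verts child_in_F[OF P that] by auto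
  moreover have "A Y1 \<inter> A Y2 = {}" if "Y1 \<in> set (ch P)" "Y2 \<in> set (ch P)" "Y1 \<noteq> Y2" for Y1 Y2
    unfolding A_def cluster_verts_def using children_disjoint[OF P that] by blast
  ultimately have "sum cw {u\<in>cluster_verts P. (x, u) \<in> linked P} = (\<Sum>Y\<in>set (ch P). sum cw (A Y))"
    by (simp add: sum.UNION_disjoint)
  then show ?thesis using sum_nth_distinct[OF distinct_ch[OF P], of "\<lambda>Y. sum cw (A Y)"]
    unfolding A_def by simp
qed

lemma eval_reach_weight_expr:
  assumes env: "children_env cw val P off env" and P: "internal P" and a: "a \<le> length (bd P)"
  shows "eval (reach_weight_expr off (shape ch bd P) a) env =
    sum cw {u\<in>cluster_verts P. (node P a, u) \<in> linked P}"
proof -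
  define r where "r = rep ch P"
  define share where "share = (\<lambda>j. sum cw {u\<in>cluster_verts (ch P ! j). (node P a, u) \<in> linked P})"
  have ir: "rep_index P < length (ch P)" "ch P ! rep_index P = {Inl r}"
    using rep_index_ch[OF P] r_def by auto
  have "value_ok cw {Inl r} (val {Inl r})"
    using env rep_props(1)[OF P] r_def unfolding children_env_def by auto
  then have rep_cell: "eval (cell off (rep_index P) 0) env = cw r"
    using eval_cell_children_env[OF env ir(1), of 0] ir(2) unfolding value_ok_def by simp
  have rep_share: "share (rep_index P) = of_bool ((node P a, r) \<in> (child_links P)\<^sup>*) * cw r"
    using reach_from_rep_child[OF P node_in_nodes[OF P a]] ir(2) unfolding share_def r_def by simp
  have "eval (child_share_expr off (shape ch bd P) a j) env =
      (if j = rep_index P then 0 else share j)" if "j < length (ch P)" for j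
    using eval_child_share_expr[OF env P a that] unfolding share_def
    by (simp add: child_share_expr_def shape_eq)
  then have "eval (reach_weight_expr off (shape ch bd P) a) env =
      share (rep_index P) + (\<Sum>j<length (ch P). if j = rep_index P then 0 else share j)"
    using rep_cell rep_share eval_node_link_expr[OF env P a, of 0] r_def
    by (simp add: reach_weight_expr_def shape_eq eval_sum_expr)
  also have "\<dots> = (\<Sum>j<length (ch P). share j)"
    using sum_lessThan_remove[OF ir(1), of share] by simp
  finally show ?thesis
    using sum_reached_children[OF P, of cw "node P a"] unfolding share_def by simp
qed

lemma value_ok_combine:
  assumes P: "internal P" and vi: "\<forall>Y\<in>set (ch P). value_ok cw Y (val Y)"
  shows "value_ok cw P (run (combine_prog (shape ch bd P)) (concat (map val (ch P))))"
proof -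
  have env: "children_env cw val P 0 (concat (map val (ch P)))"
    unfolding children_env_def using vi by force
  define v where "v = run (combine_prog (shape ch bd P)) (concat (map val (ch P)))"
  have weights: "v ! Suc i = reach_weight cw P (bd P ! i)" if i: "i < length (bd P)" for i
  proof -
    have "i = 0 \<or> i = 1" using i length_bd_internal[OF P] by linarith
    then have "v ! Suc i =
        eval (reach_weight_expr 0 (shape ch bd P) (Suc i)) (concat (map val (ch P)))"
      unfolding v_def run_def combine_prog_def by (auto simp: numeral_2_eq_2)
    then show ?thesis using eval_reach_weight_expr[OF env P, of "Suc i"] i
      unfolding reach_weight_def by (simp add: node_Suc)
  qed
  have flag: "v ! 3 = of_bool ((bd P ! 0, bd P ! 1) \<in> linked P)" if l: "length (bd P) = 2"
  proof -
    have "v ! 3 = of_bool ((node P 1, node P 2) \<in> (child_links P)\<^sup>*)"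
      using eval_node_link_expr[OF env P, of 1 2] l
      unfolding v_def run_def combine_prog_def by (simp add: numeral_3_eq_3)
    then show ?thesis
      using linked_nodes_iff[OF P bd_in_nodes[OF P, of 0] bd_in_nodes[OF P, of 1]] l
      by (simp add: numeral_2_eq_2 node_Suc[of P 0, simplified] node_Suc[of P 1, simplified])
  qed
  have "length v = 4" unfolding v_def run_def combine_prog_def by simp
  moreover have "\<not> (\<exists>r. P = {Inl r})" using P unfolding internal_def by blast
  ultimately show ?thesis unfolding value_ok_def v_def[symmetric] using weights flag by blast
qed

lemma value_ok_vertex_leaf: "value_ok cw {Inl r} [cw r, 0, 0, 0]"
  by (simp add: value_ok_def)

lemma value_ok_edge_leaf:
  assumes eE: "e \<in> E"
  shows "value_ok cw {Inr e} [0, 0, 0, of_bool (e \<in> J)]"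
proof -
  obtain a b where ab: "e = {a, b}" "a \<noteq> b" using E_doubleton[OF eE] by blast
  have XF: "{Inr e} \<in> F" using singleton_in_F eE by (simp add: elems_def)
  have "bd {Inr e} = [a, b] \<or> bd {Inr e} = [b, a]"
    using distinct_set_doubleton[OF distinct_bd[OF XF]] set_bd[OF XF] ab by simp
  moreover have "J \<inter> cluster_edges {Inr e} = (if e \<in> J then {e} else {})"
    by (auto simp: cluster_edges_def)
  then have "linked {Inr e} = (if e \<in> J then (adj_rel {e})\<^sup>* else Id)"
    unfolding linked_def by (simp add: adj_rel_def)
  moreover have "(a, b) \<in> (adj_rel {e})\<^sup>*" "(b, a) \<in> (adj_rel {e})\<^sup>*"
    using ab by (auto simp: adj_rel_def insert_commute)
  moreover have "cluster_verts {Inr e} = {}" by (simp add: cluster_verts_def)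
  ultimately show ?thesis
    using ab(2) by (auto simp: value_ok_def reach_weight_def less_Suc_eq numeral_2_eq_2)
qed

lemma value_ok_consistent:
  assumes J: "J = joined hs" and consistent: "consistent_values component_impl F ch bd w0 hs val"
  shows "X \<in> F \<Longrightarrow> value_ok (cur_weight w0 hs) X (val X)"
proof (induction "card X" arbitrary: X rule: less_induct)
  case less
  show ?case
  proof (cases "\<exists>x. X = {x}")
    case True
    then obtain x where X: "X = {x}" by blast
    have vX: "val X = leaf_values component_impl w0 hs x"
      using consistent less.prems X unfolding consistent_values_def by blast
    have x: "x \<in> elems V E" using cluster_subset_elems[OF less.prems] X by blast
    show ?thesis
    proof (cases x)
      case (Inl r)
      then show ?thesis
        using vX X value_ok_vertex_leaf[of "cur_weight w0 hs" r]
          by (simp add: leaf_values_component_impl)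
    next
      case (Inr e)
      then have "e \<in> E" using x by (auto simp: elems_def)
      from value_ok_edge_leaf[OF this, of "cur_weight w0 hs"] show ?thesis
        using vX X Inr J by (simp add: leaf_values_component_impl)
    qed
  next
    case False
    then have P: "internal X" using less.prems unfolding internal_def by blast
    have "\<forall>Y\<in>set (ch X). value_ok (cur_weight w0 hs) Y (val Y)"
      using less.hyps child_in_F[OF P] psubset_card_mono[OF finite_cluster[OF less.prems]] by blast
    moreover have "val X = run (combine_prog (shape ch bd X)) (concat (map val (ch X)))"
      using consistent less.prems False
        unfolding consistent_values_def by (simp add: component_impl_def)
    ultimately show ?thesis using value_ok_combine[OF P] by simp
  qed
qed

section \<open>Correctness of the query\<close>

definition query_state :: "('a \<Rightarrow> real) \<Rightarrow> 'a \<Rightarrow> 'a cluster \<Rightarrow> real list" where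
  "query_state cw v C =
     [sum cw {u\<in>cluster_verts C. (v, u) \<in> linked C},
      of_bool (0 < length (bd C) \<and> (v, bd C ! 0) \<in> linked C),
      of_bool (1 < length (bd C) \<and> (v, bd C ! 1) \<in> linked C)]"

lemma query_state_linked: "(v, y) \<in> linked C \<Longrightarrow> query_state cw v C = query_state cw y C"
proof -
  assume vy: "(v, y) \<in> linked C"
  then have "(v, x) \<in> linked C \<longleftrightarrow> (y, x) \<in> linked C" for x
    using linked_trans linked_sym by blast
  then show ?thesis by (simp add: query_state_def)
qed

lemma run_node_query_prog:
  assumes env: "children_env cw val P off env" and P: "internal P" and y: "y \<in> nodes P"
  shows "run (node_query_prog off (shape ch bd P) (slot ch bd P y)) env = query_state cw y P"
proof -
  have a: "slot ch bd P y \<le> length (bd P)" "node P (slot ch bd P y) = y"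
    using slot_node[OF P y] by auto
  have link: "eval (node_link_expr off (shape ch bd P) (slot ch bd P y) (Suc i)) env =
      of_bool ((y, bd P ! i) \<in> linked P)" if "i < length (bd P)" for i
    using eval_node_link_expr[OF env P a(1), of "Suc i"] a(2) that
      linked_nodes_iff[OF P y bd_in_nodes[OF P that]] by (simp add: node_Suc)
  show ?thesis
    using eval_reach_weight_expr[OF env P a(1)] a(2) link[of 0] link[of 1]
    by (simp add: node_query_prog_def shape_eq query_state_def run_def numeral_2_eq_2)
qed

lemma query_state_stays_in_child:
  assumes P: "internal P" and C: "C \<in> set (ch P)" "C \<noteq> {Inl (rep ch P)}" and v: "Inl v \<in> C"
    and no_exit: "\<not> (0 < length (bd C) \<and> (v, bd C ! 0) \<in> linked C)"
      "\<not> (1 < length (bd C) \<and> (v, bd C ! 1) \<in> linked C)"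
  shows "query_state cw v P = [query_state cw v C ! 0, 0, 0]"
proof -
  note facts = non_rep_child_facts[OF P C]
  have "(v, m) \<notin> linked C" if "m \<in> boundary C" for m
  proof -
    have "m \<in> set (bd C)" using that facts(7) by simp
    then obtain i where "i < length (bd C)" "m = bd C ! i" by (auto simp: in_set_conv_nth)
    moreover have "i = 0 \<or> i = 1" using \<open>i < length (bd C)\<close> facts(5) by linarith
    ultimately show ?thesis using no_exit by auto
  qed
  note stays = linked_stays_in_child[OF P C v this]
  have "{u\<in>cluster_verts P. (v, u) \<in> linked P} = {u\<in>cluster_verts C. (v, u) \<in> linked C}"
    using stays child_in_F[OF P C(1)] unfolding cluster_verts_def by blast
  moreover have not_bd: "(v, bd P ! i) \<notin> linked P" if "i < length (bd P)" for i
  proof -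
    have "bd P ! i \<in> boundary P" using set_bd[OF internal_in_F[OF P]] nth_mem[OF that] by simp
    then show ?thesis using stays child_in_F[OF P C(1)] unfolding boundary_def by blast
  qed
  moreover have "bd P = [] \<or> (v, bd P ! 0) \<notin> linked P" using not_bd[of 0] by (cases "bd P") auto
  ultimately show ?thesis using not_bd[of 1] by (auto simp: query_state_def)
qed

lemma run_query_step_non_rep:
  assumes env: "children_env cw val P 7 env" and P: "internal P"
    and k: "k < length (ch P)" "k \<noteq> rep_index P" and v: "Inl v \<in> ch P ! k"
    and state: "\<And>i. i < 3 \<Longrightarrow> env ! i = query_state cw v (ch P ! k) ! i"
  shows "run (query_step_prog (shape ch bd P) k) env = query_state cw v P"
proof -
  define C where "C = ch P ! k"
  have C: "C \<in> set (ch P)" "C \<noteq> {Inl (rep ch P)}" using non_rep_child[OF P k] C_def by auto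
  note facts = non_rep_child_facts[OF P C]
  have step: "query_step_prog (shape ch bd P) k = select_prog (slot ch bd P (bd C ! 0))
      (map (slot ch bd P) (bd C) ! 1) (node_query_prog 7 (shape ch bd P)) [Var 0, Const 0, Const 0]"
    using k nth_map[of 0 "bd C" "slot ch bd P"] facts(4)
    by (simp add: query_step_prog_def shape_eq Suc_le_eq C_def)
  have exit: "run (node_query_prog 7 (shape ch bd P) (slot ch bd P (bd C ! i))) env =
      query_state cw v P"
    if "i < length (bd C)" "(v, bd C ! i) \<in> linked C" for i
  proof -
    have "bd C ! i \<in> nodes P" using facts(2,7) nth_mem[OF that(1)] by blast
    moreover have "(v, bd C ! i) \<in> linked P" using that(2) linked_child_subset[OF P C(1)] by blast
    ultimately show ?thesis using run_node_query_prog[OF env P] query_state_linked by metis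
  qed
  define B0 where "B0 = (0 < length (bd C) \<and> (v, bd C ! 0) \<in> linked C)"
  define B1 where "B1 = (1 < length (bd C) \<and> (v, bd C ! 1) \<in> linked C)"
  have flags: "env ! 1 = of_bool B0" "env ! 2 = of_bool B1"
    using state[of 1] state[of 2] by (simp_all add: query_state_def B0_def B1_def C_def)
  have "length (node_query_prog 7 (shape ch bd P) a) = length [Var 0, Const 0, Const 0]" for a
    by (simp add: node_query_prog_def split: prod.split)
  note select = run_select_prog[OF flags this]
  show ?thesis
  proof (cases B0)
    case True
    then show ?thesis unfolding step select using exit[of 0] B0_def by simp
  next
    case nB0: False
    show ?thesis
    proof (cases B1)
      case True
      then show ?thesis unfolding step select using nB0 exit[of 1] B1_def by simp
    next
      case False
      have "query_state cw v P = [query_state cw v C ! 0, 0, 0]"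
        using query_state_stays_in_child[OF P C] v nB0 False unfolding B0_def B1_def C_def by blast
      then show ?thesis unfolding step select
        using nB0 False state[of 0] by (simp add: run_def C_def)
    qed
  qed
qed

lemma query_state_step:
  assumes P: "internal P" and C: "C \<in> set (ch P)" and v: "Inl v \<in> C"
    and vi: "\<forall>Y\<in>set (ch P). value_ok cw Y (val Y)" and lP: "length (val P) = 4"
  shows "run (query_step_prog (shape ch bd P) (idx (ch P) C))
      (query_state cw v C @ val P @ concat (map val (ch P))) = query_state cw v P"
proof -
  define env where "env = (query_state cw v C @ val P) @ concat (map val (ch P))"
  have env: "children_env cw val P 7 env"
    unfolding children_env_def env_def using vi lP by (force simp: query_state_def)
  have "length (query_state cw v C) = 3" by (simp add: query_state_def)
  then have state: "env ! i = query_state cw v C ! i" if "i < 3" for i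
    using that unfolding env_def by (simp add: nth_append)
  define k where "k = idx (ch P) C"
  have k: "k < length (ch P)" "ch P ! k = C" using idx_nth[OF C] k_def by auto
  have "run (query_step_prog (shape ch bd P) k) env = query_state cw v P"
  proof (cases "k = rep_index P")
    case True
    then have "C = {Inl (rep ch P)}" using k rep_index_ch[OF P] by simp
    then have "v = rep ch P" using v by simp
    then show ?thesis
      using True run_node_query_prog[OF env P rep_in_nodes]
      by (simp add: query_step_prog_def shape_eq slot_def)
  next
    case False
    then show ?thesis using run_query_step_non_rep[OF env P k(1) False] k(2) v state by simp
  qed
  then show ?thesis unfolding env_def k_def by simp
qed

lemma query_state_walk:
  assumes "sorted_wrt (\<subset>) (C # rest)" "set (C # rest) \<subseteq> {X\<in>F. Inl v \<in> X}"
    "\<forall>Z\<in>F. Inl v \<in> Z \<longrightarrow> C \<subseteq> Z \<longrightarrow> Z \<in> set (C # rest)" "\<forall>X\<in>F. value_ok cw X (val X)"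
  shows "q_walk component_impl ch bd val (C # rest) (query_state cw v C) =
    query_state cw v (last (C # rest))"
  using assms
proof (induction rest arbitrary: C)
  case (Cons P rest)
  have CP: "C \<subset> P" using Cons.prems(1) by simp
  have PF: "P \<in> F" and CF: "C \<in> F" and vC: "Inl v \<in> C" using Cons.prems(2) by auto
  have intP: "internal P" using PF CP vC unfolding internal_def by blast
  have C: "C \<in> set (ch P)"
  proof (rule maximal_subcluster_in_ch[OF intP CF CP])
    show "\<not> (\<exists>Z\<in>F. C \<subset> Z \<and> Z \<subset> P)"
    proof
      assume "\<exists>Z\<in>F. C \<subset> Z \<and> Z \<subset> P"
      then obtain Z where Z: "Z \<in> F" "C \<subset> Z" "Z \<subset> P" by blast
      then have "Z \<in> set rest" using Cons.prems(3) vC by auto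
      then show False using Cons.prems(1) Z by auto
    qed
  qed
  have "\<forall>Y\<in>set (ch P). value_ok cw Y (val Y)" using Cons.prems(4) child_in_F[OF intP] by blast
  moreover have "length (val P) = 4" using Cons.prems(4) PF unfolding value_ok_def by blast
  ultimately have "run (query_step_prog (shape ch bd P) (idx (ch P) C))
      (query_state cw v C @ val P @ concat (map val (ch P))) = query_state cw v P"
    by (rule query_state_step[OF intP C vC])
  moreover have "\<forall>Z\<in>F. Inl v \<in> Z \<longrightarrow> P \<subseteq> Z \<longrightarrow> Z \<in> set (P # rest)"
    using Cons.prems(3) CP by auto
  ultimately show ?case
    using Cons.IH[of P] Cons.prems(1,2,4) by (simp add: component_impl_def)
qed simp

lemma query_state_leaf:
  assumes "v \<in> V"
  shows "query_state cw v {Inl v} = [cw v, 0, 0]"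
proof -
  have "{Inl v} \<in> F" using singleton_in_F assms by (simp add: elems_def)
  then have "bd {Inl v} = []" using set_bd[of "{Inl v}"] by simp
  moreover have "{u\<in>cluster_verts {Inl v}. (v, u) \<in> linked {Inl v}} = {v}"
    by (auto simp: cluster_verts_def)
  ultimately show ?thesis by (simp add: query_state_def)
qed

lemma query_state_root:
  assumes "v \<in> V"
  shows "query_state cw v (elems V E) ! 0 = sum cw {u. (v, u) \<in> (adj_rel J)\<^sup>*}"
proof -
  have "J \<inter> cluster_edges (elems V E) = J"
    using J_subset_E by (auto simp: cluster_edges_def elems_def)
  then have linked_root: "linked (elems V E) = (adj_rel J)\<^sup>*" by (simp add: linked_def)
  have "u \<in> V" if "(v, u) \<in> (adj_rel J)\<^sup>*" for u
    using that
  proof (induction rule: rtrancl_induct)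
    case (step x y)
    then have "{x, y} \<in> E" using J_subset_E by (auto simp: adj_rel_def)
    then show ?case using E_doubleton by (metis doubleton_eq_iff)
  qed (fact assms)
  then have "{u\<in>cluster_verts (elems V E). (v, u) \<in> (adj_rel J)\<^sup>*} =
      {u. (v, u) \<in> (adj_rel J)\<^sup>*}"
    by (auto simp: cluster_verts_def elems_def)
  then show ?thesis by (simp add: query_state_def linked_root)
qed

lemma path_to_root:
  assumes v: "v \<in> V" and path: "set path = {X\<in>F. Inl v \<in> X}" "sorted_wrt (\<subset>) path"
  shows "path = {Inl v} # tl path" and "last path = elems V E"
proof -
  have v_elem: "Inl v \<in> elems V E" using v by (simp add: elems_def)
  have leaf: "{Inl v} \<in> set path" using path(1) singleton_in_F[OF v_elem] by simp
  then obtain C rest where C: "path = C # rest" by (cases path) auto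
  have "C = {Inl v}"
  proof (rule ccontr)
    assume "C \<noteq> {Inl v}"
    then have "C \<subset> {Inl v}" using leaf path(2) C by simp
    moreover have "Inl v \<in> C" using path(1) C by auto
    ultimately show False by blast
  qed
  then show "path = {Inl v} # tl path" using C by simp
  have "elems V E \<in> set path" using path(1) root_in_F v_elem by blast
  then have "elems V E = last path \<or> elems V E \<subset> last path"
    using sorted_wrt_last[OF path(2)] by blast
  moreover have "last path \<in> F" using path(1) C last_in_set[of path] by auto
  ultimately show "last path = elems V E" using cluster_subset_elems by blast
qed

lemma query_result_component_impl:
  assumes J: "J = joined hs" and consistent: "consistent_values component_impl F ch bd w0 hs val"
    and v: "v \<in> V" and path: "set path = {X\<in>F. Inl v \<in> X}" "sorted_wrt (\<subset>) path"
  shows "query_result component_impl ch bd val path = component_weight w0 hs v"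
proof -
  let ?cw = "cur_weight w0 hs"
  have all_ok: "\<forall>X\<in>F. value_ok ?cw X (val X)" using value_ok_consistent[OF J consistent] by blast
  obtain rest where rest: "path = {Inl v} # rest" using path_to_root(1)[OF v path] by blast
  have "{Inl v} \<in> F" using singleton_in_F v by (simp add: elems_def)
  then have "val {Inl v} = [?cw v, 0, 0, 0]"
    using consistent by (simp add: consistent_values_def leaf_values_component_impl)
  then have "run (q_init component_impl) (val (hd path)) = query_state ?cw v {Inl v}"
    using query_state_leaf[OF v] rest by (simp add: component_impl_def run_def)
  moreover have "q_walk component_impl ch bd val path (query_state ?cw v {Inl v}) =
      query_state ?cw v (last path)"
    unfolding rest by (rule query_state_walk) (use path all_ok in \<open>auto simp: rest\<close>)
  ultimately show ?thesis
    using query_state_root[OF v] path_to_root(2)[OF v path] J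
    by (simp add: query_result_def component_weight_def component_impl_def)
qed

end

theorem lemma2:
  fixes d :: nat
  shows "\<exists>I. wf_impl I \<and>
    (\<forall>(V :: 'a set) E F ch bd (w0 :: 'a \<Rightarrow> real) hs val path v.
       is_tree V E \<and> degree_bounded d V E \<and> is_RC_tree V E F ch bd \<and>
       valid_updates V E hs \<and> v \<in> V \<and>
       consistent_values I F ch bd w0 hs val \<and>
       set path = {X \<in> F. Inl v \<in> X} \<and> sorted_wrt (\<subset>) path
       \<longrightarrow> query_result I ch bd val path = component_weight w0 hs v)"
proof (intro exI conjI allI impI)
  show "wf_impl component_impl" by (rule wf_component_impl)
  fix V :: "'a set" and E F ch bd and w0 :: "'a \<Rightarrow> real" and hs val path v
  assume H: "is_tree V E \<and> degree_bounded d V E \<and> is_RC_tree V E F ch bd \<and>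
       valid_updates V E hs \<and> v \<in> V \<and>
       consistent_values component_impl F ch bd w0 hs val \<and>
       set path = {X \<in> F. Inl v \<in> X} \<and> sorted_wrt (\<subset>) path"
  have "joined hs \<subseteq> E" using H unfolding valid_updates_def joined_def by fastforce
  then interpret joined_rc_tree V E F ch bd "joined hs" using H by unfold_locales auto
  show "query_result component_impl ch bd val path = component_weight w0 hs v"
    using query_result_component_impl[OF refl] H by blast
qed

end
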